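(* Assume in addition $\rho_0\in L^1([0,\infty))$. Then for all $t>0$ the total mass is conserved: $$\int_{[0,\infty)}\rho(dx,t)=\int_0^\infty\rho_0(x)\,dx+\int_0^t\rho_b(\eta)u_b(\eta)\,d\eta,$$ and for the total momentum $$\int_{[0,\infty)}u(x,t)\,\rho(dx,t)\ \begin{cases}=\int_0^\infty\rho_0u_0\,dx+\int_0^t\rho_b u_b^2\,d\eta,& \text{if } F(0,t)\ge G(0,t),\\ \ge\int_0^\infty\rho_0u_0\,dx-\int_0^t\rho_bu_b^2\,d\eta,&\text{if } F(0,t)<G(0,t).\end{cases}$$
   Context: Standing assumptions: $u_0,u_b:[0,\infty)\to\mathbb{R}$ bounded measurable with $u_b>0$; $\rho_0,\rho_b:[0,\infty)\to(0,\infty)$ positive locally bounded measurable. For $x,t,y,\tau\ge0$: $F(y,x,t)=\int_0^y[tu_0(\eta)+\eta-x]\rho_0(\eta)\,d\eta$, $G(\tau,x,t)=\int_0^\tau[x-u_b(\eta)(t-\eta)]\rho_b(\eta)u_b(\eta)\,d\eta$, $F(x,t)=\min_{y\ge0}F(y,x,t)$, $G(x,t)=\min_{\tau\ge0}G(\tau,x,t)$ (minima attained); $y_*\le y^*$ the smallest/largest minimizers of $F(\cdot,x,t)$, $\tau_*\le\tau^*$ those of $G(\cdot,x,t)$. Definition of $u$: for $x,t>0$: (a) if $F(x,t)<G(x,t)$, $y_*=y^*$: $u=\frac{x-y_*}{t}$; (b) if $F<G$, $y_*<y^*$: $u=\frac{\int_{y_*}^{y^*}\rho_0u_0}{\int_{y_*}^{y^*}\rho_0}$;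 (c) if $F>G$, $\tau_*=\tau^*$: $u=\frac{x}{t-\tau_*}$; (d) if $F>G$, $\tau_*<\tau^*$: $u=\frac{\int_{\tau_*}^{\tau^*}\rho_bu_b^2}{\int_{\tau_*}^{\tau^*}\rho_bu_b}$; (e) if $F=G$ and ($y^*\ne0$ or $\tau^*\ne0$): $u=\frac{\int_0^{\tau^*}\rho_bu_b^2+\int_0^{y^*}\rho_0u_0}{\int_0^{\tau^*}\rho_bu_b+\int_0^{y^*}\rho_0}$; (f) if $F=G$, $y^*=\tau^*=0$: $u=x/t$. For $x=0$: $u(0,t)=u_b(t)$ if $F(0,t)>G(0,t)$, $0$ if $F(0,t)<G(0,t)$, formula (e) with $x=0$ if $F(0,t)=G(0,t)$. Definition of $m$ ($t>0,x\ge0$): $m=\int_0^{y_*(x,t)}\rho_0$ if $x>0$ and $F(x,t)\le G(x,t)$; $m=-\int_0^{\tau_*(x,t)}\rho_bu_b$ if $F(x,t)>G(x,t)$ or $x=0$. The measure $\rho(\cdot,t)$ on $[0,\infty)$: on $(0,\infty)$ it is the Lebesgue–Stieltjes measure $m(dx,t)$ of $x\mapsto m(x,t)$ (i.e. $\partial_xm$); at $x=0$ it has an atom $\big(\lim_{x\searrow0}m(x,t)-m(0,t)\big)\delta_0$ if $F(0,t)\le G(0,t)$, and no atom if $F(0,t)>G(0,t)$. Thus $\int_{[0,\infty)}u\,\rho(dx,t)=\int_{(0,\infty)}u\,m(dx,t)$ plus $u(0,t)\big(m(0+,t)-m(0,t)\big)$ when $F(0,t)\le G(0,t)$. *)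

theory Defs
  imports "HOL-Analysis.Analysis"
begin

text \<open>Parameters: u0, ub (velocities), r0, rb (densities), all real => real,
  only their values on [0,inf) matter.\<close>

definition Fy :: "(real \<Rightarrow> real) \<Rightarrow> (real \<Rightarrow> real) \<Rightarrow> real \<Rightarrow> real \<Rightarrow> real \<Rightarrow> real" where
  "Fy u0 r0 y x t = (LINT \<eta>:{0..y}|lborel. (t * u0 \<eta> + \<eta> - x) * r0 \<eta>)"

definition Gy :: "(real \<Rightarrow> real) \<Rightarrow> (real \<Rightarrow> real) \<Rightarrow> real \<Rightarrow> real \<Rightarrow> real \<Rightarrow> real" where
  "Gy ub rb \<tau> x t = (LINT \<eta>:{0..\<tau>}|lborel. (x - ub \<eta> * (t - \<eta>)) * rb \<eta> * ub \<eta>)"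

text \<open>F(x,t) = min over y >= 0, G(x,t) = min over tau >= 0 (the minima are attained).\<close>
definition Fm :: "(real \<Rightarrow> real) \<Rightarrow> (real \<Rightarrow> real) \<Rightarrow> real \<Rightarrow> real \<Rightarrow> real" where
  "Fm u0 r0 x t = Inf ((\<lambda>y. Fy u0 r0 y x t) ` {0..})"

definition Gm :: "(real \<Rightarrow> real) \<Rightarrow> (real \<Rightarrow> real) \<Rightarrow> real \<Rightarrow> real \<Rightarrow> real" where
  "Gm ub rb x t = Inf ((\<lambda>\<tau>. Gy ub rb \<tau> x t) ` {0..})"

definition ylo :: "(real \<Rightarrow> real) \<Rightarrow> (real \<Rightarrow> real) \<Rightarrow> real \<Rightarrow> real \<Rightarrow> real" where
  "ylo u0 r0 x t = Inf {y. 0 \<le> y \<and> Fy u0 r0 y x t = Fm u0 r0 x t}"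

definition yhi :: "(real \<Rightarrow> real) \<Rightarrow> (real \<Rightarrow> real) \<Rightarrow> real \<Rightarrow> real \<Rightarrow> real" where
  "yhi u0 r0 x t = Sup {y. 0 \<le> y \<and> Fy u0 r0 y x t = Fm u0 r0 x t}"

definition tlo :: "(real \<Rightarrow> real) \<Rightarrow> (real \<Rightarrow> real) \<Rightarrow> real \<Rightarrow> real \<Rightarrow> real" where
  "tlo ub rb x t = Inf {\<tau>. 0 \<le> \<tau> \<and> Gy ub rb \<tau> x t = Gm ub rb x t}"

definition thi :: "(real \<Rightarrow> real) \<Rightarrow> (real \<Rightarrow> real) \<Rightarrow> real \<Rightarrow> real \<Rightarrow> real" where
  "thi ub rb x t = Sup {\<tau>. 0 \<le> \<tau> \<and> Gy ub rb \<tau> x t = Gm ub rb x t}"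

definition ue :: "(real \<Rightarrow> real) \<Rightarrow> (real \<Rightarrow> real) \<Rightarrow> (real \<Rightarrow> real) \<Rightarrow> (real \<Rightarrow> real)
    \<Rightarrow> real \<Rightarrow> real \<Rightarrow> real" where
  "ue u0 ub r0 rb x t =
     ((LINT \<eta>:{0..thi ub rb x t}|lborel. rb \<eta> * (ub \<eta>)\<^sup>2) + (LINT \<eta>:{0..yhi u0 r0 x t}|lborel. r0 \<eta> * u0 \<eta>))
     / ((LINT \<eta>:{0..thi ub rb x t}|lborel. rb \<eta> * ub \<eta>) + (LINT \<eta>:{0..yhi u0 r0 x t}|lborel. r0 \<eta>))"

definition vel :: "(real \<Rightarrow> real) \<Rightarrow> (real \<Rightarrow> real) \<Rightarrow> (real \<Rightarrow> real) \<Rightarrow> (real \<Rightarrow> real)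
    \<Rightarrow> real \<Rightarrow> real \<Rightarrow> real" where
  "vel u0 ub r0 rb x t =
    (let F = Fm u0 r0 x t; G = Gm ub rb x t;
         y1 = ylo u0 r0 x t; y2 = yhi u0 r0 x t; t1 = tlo ub rb x t; t2 = thi ub rb x t in
     if x > 0 then
       (if F < G then
          (if y1 = y2 then (x - y1) / t
           else (LINT \<eta>:{y1..y2}|lborel. r0 \<eta> * u0 \<eta>) / (LINT \<eta>:{y1..y2}|lborel. r0 \<eta>))
        else if F > G then
          (if t1 = t2 then x / (t - t1)
           else (LINT \<eta>:{t1..t2}|lborel. rb \<eta> * (ub \<eta>)\<^sup>2) / (LINT \<eta>:{t1..t2}|lborel. rb \<eta> * ub \<eta>))
        else if y2 \<noteq> 0 \<or> t2 \<noteq> 0 then ue u0 ub r0 rb x t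
        else x / t)
     else
       (if F > G then ub t else if F < G then 0 else ue u0 ub r0 rb 0 t))"

definition mass :: "(real \<Rightarrow> real) \<Rightarrow> (real \<Rightarrow> real) \<Rightarrow> (real \<Rightarrow> real) \<Rightarrow> (real \<Rightarrow> real)
    \<Rightarrow> real \<Rightarrow> real \<Rightarrow> real" where
  "mass u0 ub r0 rb x t =
    (if x > 0 \<and> Fm u0 r0 x t \<le> Gm ub rb x t
     then (LINT \<eta>:{0..ylo u0 r0 x t}|lborel. r0 \<eta>)
     else - (LINT \<eta>:{0..tlo ub rb x t}|lborel. rb \<eta> * ub \<eta>))"

definition massR :: "(real \<Rightarrow> real) \<Rightarrow> (real \<Rightarrow> real) \<Rightarrow> (real \<Rightarrow> real) \<Rightarrow> (real \<Rightarrow> real)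
    \<Rightarrow> real \<Rightarrow> real \<Rightarrow> real" where
  "massR u0 ub r0 rb x t = Lim (at_right x) (\<lambda>z. mass u0 ub r0 rb z t)"

text \<open>The Lebesgue--Stieltjes measure m(dx,t) of x \<mapsto> m(x,t) on (0,inf): it is the
  interval measure of the right-continuous version x \<mapsto> m(x+,t), extended by the
  constant m(0+,t) to x \<le> 0 (so it charges nothing on (-inf,0]).\<close>
definition rhoLS :: "(real \<Rightarrow> real) \<Rightarrow> (real \<Rightarrow> real) \<Rightarrow> (real \<Rightarrow> real) \<Rightarrow> (real \<Rightarrow> real)
    \<Rightarrow> real \<Rightarrow> real measure" where
  "rhoLS u0 ub r0 rb t = interval_measure (\<lambda>x. massR u0 ub r0 rb (max x 0) t)"

text \<open>Weight of the atom of rho(.,t) at x = 0.\<close>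
definition atom0 :: "(real \<Rightarrow> real) \<Rightarrow> (real \<Rightarrow> real) \<Rightarrow> (real \<Rightarrow> real) \<Rightarrow> (real \<Rightarrow> real)
    \<Rightarrow> real \<Rightarrow> real" where
  "atom0 u0 ub r0 rb t =
    (if Fm u0 r0 0 t \<le> Gm ub rb 0 t then massR u0 ub r0 rb 0 t - mass u0 ub r0 rb 0 t else 0)"

end

theory Submission
  imports Defs "HOL-Probability.Distribution_Functions"
begin

text \<open>
  Both \<open>F(\<cdot>, x, t)\<close> and \<open>G(\<cdot>, x, t)\<close> are potentials \<open>A y - x M y\<close> with \<open>M\<close> strictly
  increasing, so their minimizers depend monotonically and one-sidedly continuously on \<open>x\<close>.
  The sign of \<open>F - G\<close> changes once, at an interface \<open>x0\<close>: to its right the mass \<open>m\<close> comes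
  from the initial data, to its left from the boundary. Let \<open>cmass\<close> be the right-continuous
  version of \<open>m\<close> (the distribution function of \<open>\<rho>\<close>) and \<open>cmom\<close> the corresponding
  cumulative momentum. Comparing the minimality conditions at two points confines the mean
  velocity of the mass between them to the range of characteristic speeds, so \<open>u d\<rho>\<close> and
  \<open>d cmom\<close> differ by at most \<open>\<epsilon> d\<rho>\<close> on small intervals, while the atom at a point carries
  exactly the jump of \<open>cmom\<close>. A gauge argument then gives
  \<open>\<integral>\<^bsub>(a,b]\<^esub> u d\<rho> = cmom b - cmom a\<close>; letting \<open>a \<rightarrow> 0\<close>, \<open>b \<rightarrow> \<infinity>\<close> and adding the
  atom at \<open>x = 0\<close> gives the balance laws.
\<close>

section \<open>Thresholds, gauges and interval measures\<close>

lemma antimono_threshold: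
  fixes f :: "real \<Rightarrow> real"
  assumes anti: "antimono_on {0..} f"
    and cont: "\<And>b. continuous_on {0..b} f"
    and neg: "0 \<le> X" "f X \<le> 0"
  defines "x0 \<equiv> Inf {x. 0 \<le> x \<and> f x \<le> 0}"
  shows antimono_threshold_nonneg: "0 \<le> x0"
    and antimono_threshold_below: "\<And>x. 0 \<le> x \<Longrightarrow> x < x0 \<Longrightarrow> 0 < f x"
    and antimono_threshold_above: "\<And>x. x0 \<le> x \<Longrightarrow> f x \<le> 0"
    and antimono_threshold_zero: "0 < x0 \<Longrightarrow> f x0 = 0"
proof -
  let ?Z = "{x. 0 \<le> x \<and> f x \<le> 0}"
  have bdd: "bdd_below ?Z" by (auto intro: bdd_belowI[of _ 0])
  have ne: "?Z \<noteq> {}" using neg by blast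
  show x0_nonneg: "0 \<le> x0" unfolding x0_def by (rule cInf_greatest[OF ne]) simp
  show below: "0 < f x" if "0 \<le> x" "x < x0" for x
  proof (rule ccontr)
    assume "\<not> 0 < f x"
    then have "x \<in> ?Z" using that by simp
    then have "x0 \<le> x" unfolding x0_def by (rule cInf_lower[OF _ bdd])
    then show False using that by simp
  qed
  have right_lim: "(f \<longlongrightarrow> f x) (at_right x)" if "0 \<le> x" for x
    using continuous_on_subset[OF cont, of "{x..x + 1}" "x + 1"] that
    by (intro continuous_on_Icc_at_rightD) auto
  have above_strict: "f x \<le> 0" if "x0 < x" for x
  proof -
    have "Inf ?Z < x" using that unfolding x0_def .
    then obtain z where "z \<in> ?Z" "z < x" using cInf_lessD[OF ne] by blast
    then show ?thesis using monotone_onD[OF anti, of z x] by simp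
  qed
  have "f x0 \<le> 0"
  proof (rule tendsto_upperbound[OF right_lim[OF x0_nonneg]])
    show "\<forall>\<^sub>F x in at_right x0. f x \<le> 0"
      by (auto simp: eventually_at_right_field intro!: exI[of _ "x0 + 1"] above_strict)
  qed simp
  then show above: "f x \<le> 0" if "x0 \<le> x" for x
    using that above_strict by (cases "x = x0") auto
  assume "0 < x0"
  have "(f \<longlongrightarrow> f x0) (at_left x0)"
    using continuous_on_Icc_at_leftD[OF cont \<open>0 < x0\<close>] .
  moreover have "\<forall>\<^sub>F x in at_left x0. 0 \<le> f x"
    using \<open>0 < x0\<close> by (auto simp: eventually_at_left_field intro!: exI[of _ 0] less_imp_le below)
  ultimately have "0 \<le> f x0" by (rule tendsto_lowerbound) simp
  then show "f x0 = 0" using \<open>f x0 \<le> 0\<close> by simp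
qed

lemma increment_bound_by_gauge:
  fixes \<phi> G :: "real \<Rightarrow> real"
  assumes "a \<le> b"
    and local: "\<And>x. x \<in> {a..b} \<Longrightarrow> \<exists>d>0. \<forall>c e. a \<le> c \<and> c \<le> x \<and> x \<le> e \<and> e \<le> b
        \<and> x - d < c \<and> e < x + d \<longrightarrow> \<bar>\<phi> e - \<phi> c\<bar> \<le> G e - G c"
  shows "\<bar>\<phi> b - \<phi> a\<bar> \<le> G b - G a"
proof -
  obtain d where d: "\<And>x. x \<in> {a..b} \<Longrightarrow> 0 < d x \<and> (\<forall>c e. a \<le> c \<and> c \<le> x \<and> x \<le> e \<and> e \<le> b
      \<and> x - d x < c \<and> e < x + d x \<longrightarrow> \<bar>\<phi> e - \<phi> c\<bar> \<le> G e - G c)"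
    using local by metis
  have "gauge (\<lambda>x. ball x (if x \<in> {a..b} then d x else 1))"
    using d by (auto simp: gauge_def)
  then obtain p where p: "p tagged_division_of {a..b}"
      and fine: "(\<lambda>x. ball x (if x \<in> {a..b} then d x else 1)) fine p"
    by (rule fine_division_exists_real)
  have piece: "\<bar>\<phi> (Sup K) - \<phi> (Inf K)\<bar> \<le> G (Sup K) - G (Inf K)" if xK: "(x, K) \<in> p" for x K
  proof -
    obtain c e where K: "K = {c..e}" "c \<le> x" "x \<le> e"
      using tagged_division_ofD(2,4)[OF p xK] by (metis box_real(2) atLeastAtMost_iff)
    have "K \<subseteq> {a..b}" using tagged_division_ofD(3)[OF p xK] .
    then have ab: "a \<le> c" "e \<le> b" "x \<in> {a..b}" using K by auto
    have "K \<subseteq> ball x (if x \<in> {a..b} then d x else 1)" using bspec[OF fine[unfolded fine_def] xK] by simp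
    then have "K \<subseteq> ball x (d x)" using ab by simp
    moreover have "c \<in> K" "e \<in> K" using K by auto
    ultimately have "c \<in> ball x (d x)" "e \<in> ball x (d x)" by auto
    then have "x - d x < c" "e < x + d x" by (auto simp: dist_real_def)
    then have "\<bar>\<phi> e - \<phi> c\<bar> \<le> G e - G c" using d[OF ab(3)] ab K by blast
    then show ?thesis using K by simp
  qed
  have "\<bar>\<phi> b - \<phi> a\<bar> = \<bar>\<Sum>(x, K)\<in>p. \<phi> (Sup K) - \<phi> (Inf K)\<bar>"
    using additive_tagged_division_1[OF \<open>a \<le> b\<close> p, of \<phi>] by simp
  also have "\<dots> \<le> (\<Sum>(x, K)\<in>p. \<bar>\<phi> (Sup K) - \<phi> (Inf K)\<bar>)"
    by (rule order_trans[OF sum_abs]) (simp add: case_prod_unfold)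
  also have "\<dots> \<le> (\<Sum>(x, K)\<in>p. G (Sup K) - G (Inf K))"
    by (rule sum_mono) (use piece in auto)
  also have "\<dots> = G b - G a"
    using additive_tagged_division_1[OF \<open>a \<le> b\<close> p, of G] by simp
  finally show ?thesis .
qed

lemma eq_if_locally_negligible:
  fixes \<phi> G :: "real \<Rightarrow> real"
  assumes "a \<le> b"
    and local: "\<And>\<epsilon> x. 0 < \<epsilon> \<Longrightarrow> x \<in> {a..b} \<Longrightarrow> \<exists>d>0. \<forall>c e. a \<le> c \<and> c \<le> x \<and> x \<le> e \<and> e \<le> b
        \<and> x - d < c \<and> e < x + d \<longrightarrow> \<bar>\<phi> e - \<phi> c\<bar> \<le> \<epsilon> * (G e - G c)"
  shows "\<phi> b = \<phi> a"
proof (rule ccontr)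
  assume "\<phi> b \<noteq> \<phi> a"
  define \<epsilon> where "\<epsilon> = \<bar>\<phi> b - \<phi> a\<bar> / (2 * (\<bar>G b - G a\<bar> + 1))"
  have "0 < \<epsilon>" using \<open>\<phi> b \<noteq> \<phi> a\<close> unfolding \<epsilon>_def by (intro divide_pos_pos) (simp_all add: add_nonneg_pos)
  have "\<bar>\<phi> b - \<phi> a\<bar> \<le> \<epsilon> * G b - \<epsilon> * G a"
    using local[OF \<open>0 < \<epsilon>\<close>] by (intro increment_bound_by_gauge[OF \<open>a \<le> b\<close>]) (simp add: right_diff_distrib)
  also have "\<dots> \<le> \<epsilon> * \<bar>G b - G a\<bar>"
    using \<open>0 < \<epsilon>\<close> by (simp add: right_diff_distrib[symmetric])
  also have "\<dots> = \<bar>\<phi> b - \<phi> a\<bar> * (\<bar>G b - G a\<bar> / (2 * (\<bar>G b - G a\<bar> + 1)))"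
    by (simp add: \<epsilon>_def)
  also have "\<dots> < \<bar>\<phi> b - \<phi> a\<bar>"
  proof -
    have "\<bar>G b - G a\<bar> / (2 * (\<bar>G b - G a\<bar> + 1)) < 1"
      by (subst divide_less_eq_1_pos) (simp_all add: add_nonneg_pos)
    moreover have "0 < \<bar>\<phi> b - \<phi> a\<bar>" using \<open>\<phi> b \<noteq> \<phi> a\<close> by simp
    ultimately show ?thesis using mult_strict_left_mono by fastforce
  qed
  finally show False by simp
qed

lemma (in finite_measure) set_integral_sandwich:
  fixes f :: "'a \<Rightarrow> real"
  assumes f: "set_integrable M S f" and S: "S \<in> sets M"
    and bounds: "\<And>z. z \<in> S \<Longrightarrow> l \<le> f z \<and> f z \<le> h"
    and q: "l * measure M S \<le> q" "q \<le> h * measure M S"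
  shows "\<bar>(LINT z:S|M. f z) - q\<bar> \<le> (h - l) * measure M S"
proof -
  have const: "set_integrable M S (\<lambda>_. c)" for c :: real
    using S unfolding set_integrable_def
    by (intro integrable_scaleR_left integrable_real_indicator) (auto simp: less_top[symmetric])
  have "l * measure M S = (LINT z:S|M. l)" using S by (simp add: set_integral_const)
  also have "\<dots> \<le> (LINT z:S|M. f z)" by (rule set_integral_mono[OF const f]) (use bounds in auto)
  finally have "l * measure M S \<le> (LINT z:S|M. f z)" .
  moreover have "(LINT z:S|M. f z) \<le> (LINT z:S|M. h)"
    by (rule set_integral_mono[OF f const]) (use bounds in auto)
  moreover have "(LINT z:S|M. h) = h * measure M S" using S by (simp add: set_integral_const)
  ultimately show ?thesis using q by (auto simp: abs_le_iff algebra_simps)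
qed

lemma interval_measure_add_const: "interval_measure (\<lambda>x. F x + c) = interval_measure F"
  unfolding interval_measure_def by simp

lemma
  fixes F :: "real \<Rightarrow> real"
  assumes mono: "\<And>x y. x \<le> y \<Longrightarrow> F x \<le> F y" and right_cont: "\<And>a. continuous (at_right a) F"
    and bot: "(F \<longlongrightarrow> l) at_bot" and top: "(F \<longlongrightarrow> u) at_top"
  shows finite_borel_measure_interval_measure_bounded: "finite_borel_measure (interval_measure F)"
    and cdf_interval_measure_bounded: "cdf (interval_measure F) x = F x - l"
    and measure_interval_measure_UNIV: "measure (interval_measure F) UNIV = u - l"
proof -
  define G where "G x = F x + (- l)" for x
  have eq: "interval_measure G = interval_measure F"
    unfolding G_def by (rule interval_measure_add_const)
  have G: "\<And>x y. x \<le> y \<Longrightarrow> G x \<le> G y" "\<And>a. continuous (at_right a) G"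
      "(G \<longlongrightarrow> 0) at_bot" "(G \<longlongrightarrow> u - l) at_top"
    unfolding G_def using mono right_cont bot top
    by (auto intro!: continuous_intros tendsto_eq_intros)
  have "l \<le> F 0"
    by (rule tendsto_upperbound[OF bot]) (auto simp: eventually_at_bot_linorder intro!: exI[of _ 0] mono)
  moreover have "F 0 \<le> u"
    by (rule tendsto_lowerbound[OF top]) (auto simp: eventually_at_top_linorder intro!: exI[of _ 0] mono)
  ultimately have "0 \<le> u - l" by simp
  show "finite_borel_measure (interval_measure F)"
    using finite_borel_measure_interval_measure[OF G \<open>0 \<le> u - l\<close>] by (simp add: eq)
  show "cdf (interval_measure F) x = F x - l"
    using cdf_interval_measure[OF G(1-3)] by (simp add: eq G_def)
  show "measure (interval_measure F) UNIV = u - l"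
    using interval_measure_UNIV[OF G \<open>0 \<le> u - l\<close>] \<open>0 \<le> u - l\<close> by (simp add: eq measure_def)
qed

context finite_borel_measure
begin

lemma measure_Ioi_cdf: "measure M {x<..} = measure M (space M) - cdf M x"
proof -
  have "space M = {..x} \<union> {x<..}" by (auto simp: borel_UNIV)
  then have "measure M (space M) = measure M ({..x} \<union> {x<..})" by simp
  also have "\<dots> = cdf M x + measure M {x<..}"
    by (subst finite_measure_Union) (auto simp: cdf_def)
  finally show ?thesis by simp
qed

lemma measure_Iio_cdf_left_limit: "(cdf M \<longlongrightarrow> L) (at_left x) \<Longrightarrow> measure M {..<x} = L"
  using tendsto_unique[OF _ cdf_at_left] by simp

lemma measure_singleton_cdf: "measure M {x} = cdf M x - measure M {..<x}"
  unfolding cdf_def ivl_disj_un(2)[symmetric] by (subst finite_measure_Union) auto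

lemma measure_Ioo_cdf: "c < x \<Longrightarrow> measure M {c<..<x} = measure M {..<x} - cdf M c"
proof -
  assume "c < x"
  then have "{..<x} = {..c} \<union> {c<..<x}" by auto
  then have "measure M {..<x} = measure M ({..c} \<union> {c<..<x})" by simp
  also have "\<dots> = cdf M c + measure M {c<..<x}" by (subst finite_measure_Union) (auto simp: cdf_def)
  finally show ?thesis by simp
qed

end

section \<open>Families of minimization problems\<close>

locale potential =
  fixes A M :: "real \<Rightarrow> real" and D :: "real set" and R :: "real \<Rightarrow> real"
  assumes M_0: "M 0 = 0"
    and M_strict_mono: "\<And>y1 y2. 0 \<le> y1 \<Longrightarrow> y1 < y2 \<Longrightarrow> M y1 < M y2"
    and continuous_A: "continuous_on {0..} A"
    and continuous_M: "continuous_on {0..} M"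
    and R_nonneg: "\<And>x. x \<in> D \<Longrightarrow> 0 \<le> R x"
    and increasing_beyond_R:
      "\<And>x y1 y2. x \<in> D \<Longrightarrow> R x \<le> y1 \<Longrightarrow> y1 < y2 \<Longrightarrow> A y1 - x * M y1 < A y2 - x * M y2"
begin

definition Phi :: "real \<Rightarrow> real \<Rightarrow> real" where "Phi y x = A y - x * M y"

definition Phi_min :: "real \<Rightarrow> real" where "Phi_min x = Inf ((\<lambda>y. Phi y x) ` {0..})"

definition argmins :: "real \<Rightarrow> real set" where "argmins x = {y. 0 \<le> y \<and> Phi y x = Phi_min x}"

definition lo :: "real \<Rightarrow> real" where "lo x = Inf (argmins x)"

definition hi :: "real \<Rightarrow> real" where "hi x = Sup (argmins x)"

lemma M_nonneg: "0 \<le> y \<Longrightarrow> 0 \<le> M y"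
  using M_strict_mono[of 0 y] M_0 by (cases "y = 0") auto

lemma M_mono: "0 \<le> y1 \<Longrightarrow> y1 \<le> y2 \<Longrightarrow> M y1 \<le> M y2"
  using M_strict_mono[of y1 y2] by (cases "y1 = y2") auto

lemma continuous_on_Phi: "continuous_on {0..} (\<lambda>y. Phi y x)"
  unfolding Phi_def by (intro continuous_intros continuous_A continuous_M)

lemma ex_minimizer: assumes "x \<in> D" shows "\<exists>y\<in>{0..R x}. \<forall>y'\<ge>0. Phi y x \<le> Phi y' x"
proof -
  have R: "0 \<le> R x" using R_nonneg assms .
  have "continuous_on {0..R x} (\<lambda>y. Phi y x)"
    by (rule continuous_on_subset[OF continuous_on_Phi]) auto
  moreover have "{0..R x} \<noteq> {}" using R by simp
  ultimately obtain y where y: "y \<in> {0..R x}" "\<And>y'. y' \<in> {0..R x} \<Longrightarrow> Phi y x \<le> Phi y' x"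
    using continuous_attains_inf[OF compact_Icc] by blast
  have "Phi y x \<le> Phi y' x" if "0 \<le> y'" for y'
  proof (cases "y' \<le> R x")
    case True
    then show ?thesis using y that by auto
  next
    case False
    then have "Phi (R x) x < Phi y' x"
      using increasing_beyond_R[OF assms, of "R x" y'] by (auto simp: Phi_def)
    moreover have "Phi y x \<le> Phi (R x) x" using y R by auto
    ultimately show ?thesis by simp
  qed
  then show ?thesis using y by blast
qed

lemma Phi_min_le: assumes "x \<in> D" "0 \<le> y" shows "Phi_min x \<le> Phi y x"
proof -
  obtain y0 where "\<forall>y'\<ge>0. Phi y0 x \<le> Phi y' x" using ex_minimizer assms by blast
  then have "bdd_below ((\<lambda>y. Phi y x) ` {0..})" by (auto intro!: bdd_belowI2)
  then show ?thesis unfolding Phi_min_def using assms by (auto intro!: cInf_lower)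
qed

lemma Phi_min_eq:
  assumes "0 \<le> y0" "\<And>y'. 0 \<le> y' \<Longrightarrow> Phi y0 x \<le> Phi y' x" shows "Phi_min x = Phi y0 x"
  unfolding Phi_min_def using assms by (intro cInf_eq_minimum) auto

lemma argmins_iff:
  assumes "x \<in> D" shows "y \<in> argmins x \<longleftrightarrow> 0 \<le> y \<and> (\<forall>y'\<ge>0. Phi y x \<le> Phi y' x)"
proof
  assume "y \<in> argmins x"
  then show "0 \<le> y \<and> (\<forall>y'\<ge>0. Phi y x \<le> Phi y' x)"
    using Phi_min_le[OF assms] by (auto simp: argmins_def)
next
  assume "0 \<le> y \<and> (\<forall>y'\<ge>0. Phi y x \<le> Phi y' x)"
  then show "y \<in> argmins x" using Phi_min_eq[of y x] by (auto simp: argmins_def)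
qed

lemma argmins_minimal: "x \<in> D \<Longrightarrow> y \<in> argmins x \<Longrightarrow> 0 \<le> y' \<Longrightarrow> Phi y x \<le> Phi y' x"
  using argmins_iff by blast

lemma Phi_min_argmin: "y \<in> argmins x \<Longrightarrow> Phi_min x = Phi y x"
  by (simp add: argmins_def)

lemma argmins_nonneg: "y \<in> argmins x \<Longrightarrow> 0 \<le> y"
  by (simp add: argmins_def)

lemma argmins_nonempty: assumes "x \<in> D" shows "argmins x \<noteq> {}"
proof -
  obtain y where "y \<in> {0..R x}" "\<forall>y'\<ge>0. Phi y x \<le> Phi y' x" using ex_minimizer[OF assms] ..
  then have "y \<in> argmins x" using argmins_iff[OF assms] by simp
  then show ?thesis by blast
qed

lemma argmins_le_R: assumes "x \<in> D" "y \<in> argmins x" shows "y \<le> R x"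
proof (rule ccontr)
  assume "\<not> y \<le> R x"
  then have "Phi (R x) x < Phi y x"
    using increasing_beyond_R[OF assms(1), of "R x" y] by (auto simp: Phi_def)
  moreover have "Phi y x \<le> Phi (R x) x"
    using argmins_minimal[OF assms] R_nonneg[OF assms(1)] .
  ultimately show False by simp
qed

lemma closed_argmins: assumes "x \<in> D" shows "closed (argmins x)"
proof -
  have "argmins x = {y \<in> {0..R x}. Phi y x = Phi_min x}"
    using argmins_le_R[OF assms] by (auto simp: argmins_def)
  moreover have "continuous_on {0..R x} (\<lambda>y. Phi y x)"
    by (rule continuous_on_subset[OF continuous_on_Phi]) auto
  ultimately show ?thesis
    using continuous_closed_preimage_constant[of "{0..R x}" "\<lambda>y. Phi y x" "Phi_min x"] by simp
qed

lemma bdd_above_argmins: "x \<in> D \<Longrightarrow> bdd_above (argmins x)"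
  by (rule bdd_aboveI[of _ "R x"]) (rule argmins_le_R)

lemma bdd_below_argmins: "bdd_below (argmins x)"
  by (rule bdd_belowI[of _ 0]) (simp add: argmins_def)

lemma lo_in_argmins: "x \<in> D \<Longrightarrow> lo x \<in> argmins x"
  unfolding lo_def by (rule closed_contains_Inf[OF argmins_nonempty bdd_below_argmins closed_argmins])

lemma hi_in_argmins: "x \<in> D \<Longrightarrow> hi x \<in> argmins x"
  unfolding hi_def by (rule closed_contains_Sup[OF argmins_nonempty bdd_above_argmins closed_argmins])

lemma lo_le: "y \<in> argmins x \<Longrightarrow> lo x \<le> y"
  unfolding lo_def by (rule cInf_lower[OF _ bdd_below_argmins])

lemma hi_ge: "x \<in> D \<Longrightarrow> y \<in> argmins x \<Longrightarrow> y \<le> hi x"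
  unfolding hi_def by (rule cSup_upper[OF _ bdd_above_argmins])

lemma lo_le_hi: "x \<in> D \<Longrightarrow> lo x \<le> hi x"
  using lo_le[OF hi_in_argmins] .

lemma lo_nonneg: "x \<in> D \<Longrightarrow> 0 \<le> lo x"
  using lo_in_argmins argmins_nonneg by blast

lemma hi_nonneg: "x \<in> D \<Longrightarrow> 0 \<le> hi x"
  using hi_in_argmins argmins_nonneg by blast

lemma hi_le_R: "x \<in> D \<Longrightarrow> hi x \<le> R x"
  using hi_in_argmins argmins_le_R by blast

lemma argmins_increment_bounds:
  assumes "x1 \<in> D" "x2 \<in> D" "y1 \<in> argmins x1" "y2 \<in> argmins x2"
  shows "x1 * (M y2 - M y1) \<le> A y2 - A y1" "A y2 - A y1 \<le> x2 * (M y2 - M y1)"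
proof -
  have "Phi y1 x1 \<le> Phi y2 x1" using argmins_minimal[OF assms(1,3) argmins_nonneg[OF assms(4)]] .
  then show "x1 * (M y2 - M y1) \<le> A y2 - A y1" by (simp add: Phi_def algebra_simps)
  have "Phi y2 x2 \<le> Phi y1 x2" using argmins_minimal[OF assms(2,4) argmins_nonneg[OF assms(3)]] .
  then show "A y2 - A y1 \<le> x2 * (M y2 - M y1)" by (simp add: Phi_def algebra_simps)
qed

lemma argmins_monotone:
  assumes "x1 \<in> D" "x2 \<in> D" "x1 < x2" "y1 \<in> argmins x1" "y2 \<in> argmins x2" shows "y1 \<le> y2"
proof (rule ccontr)
  assume "\<not> y1 \<le> y2"
  then have "M y2 < M y1" using M_strict_mono argmins_nonneg[OF assms(5)] by simp
  moreover have "x1 * (M y2 - M y1) \<le> x2 * (M y2 - M y1)"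
    using argmins_increment_bounds[OF assms(1,2,4,5)] by linarith
  ultimately show False using assms(3) by (smt (verit) mult_less_cancel_right)
qed

lemma hi_le_lo: "x1 \<in> D \<Longrightarrow> x2 \<in> D \<Longrightarrow> x1 < x2 \<Longrightarrow> hi x1 \<le> lo x2"
  by (rule argmins_monotone[OF _ _ _ hi_in_argmins lo_in_argmins])

lemma lo_mono: "x1 \<in> D \<Longrightarrow> x2 \<in> D \<Longrightarrow> x1 \<le> x2 \<Longrightarrow> lo x1 \<le> lo x2"
  using hi_le_lo[of x1 x2] lo_le_hi[of x1] by (cases "x1 = x2") auto

lemma hi_mono: "x1 \<in> D \<Longrightarrow> x2 \<in> D \<Longrightarrow> x1 \<le> x2 \<Longrightarrow> hi x1 \<le> hi x2"
  using hi_le_lo[of x1 x2] lo_le_hi[of x2] by (cases "x1 = x2") auto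

lemma Phi_min_step:
  assumes "x2 \<in> D" "y1 \<in> argmins x1" shows "Phi_min x2 \<le> Phi_min x1 - (x2 - x1) * M y1"
proof -
  have "Phi_min x2 \<le> Phi y1 x2" using Phi_min_le[OF assms(1) argmins_nonneg[OF assms(2)]] .
  also have "\<dots> = Phi y1 x1 - (x2 - x1) * M y1" by (simp add: Phi_def algebra_simps)
  finally show ?thesis using Phi_min_argmin[OF assms(2)] by simp
qed

lemma Phi_min_antimono: assumes "x1 \<in> D" "x2 \<in> D" "x1 \<le> x2" shows "Phi_min x2 \<le> Phi_min x1"
proof -
  have "0 \<le> (x2 - x1) * M (lo x1)" using assms lo_nonneg M_nonneg by simp
  then show ?thesis using Phi_min_step[OF assms(2) lo_in_argmins[OF assms(1)]] by linarith
qed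

lemma Phi_min_decrement_le:
  assumes "x1 \<in> D" "x2 \<in> D" "x1 \<le> x2" shows "Phi_min x1 - Phi_min x2 \<le> (x2 - x1) * M (R x2)"
proof -
  have "Phi_min x1 - Phi_min x2 \<le> (x2 - x1) * M (lo x2)"
    using Phi_min_step[OF assms(1) lo_in_argmins[OF assms(2)]] by (simp add: algebra_simps)
  also have "\<dots> \<le> (x2 - x1) * M (R x2)"
    using assms lo_nonneg lo_le_hi hi_le_R by (intro mult_left_mono M_mono) (auto intro: order.trans)
  finally show ?thesis .
qed

lemma argmins_closed_graph:
  assumes x: "x \<in> D" and F: "F \<noteq> bot" and xs: "(xs \<longlongrightarrow> x) F" and ys: "(ys \<longlongrightarrow> y) F"
    and ev: "\<forall>\<^sub>F n in F. xs n \<in> D \<and> ys n \<in> argmins (xs n)"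
  shows "y \<in> argmins x"
proof -
  have ev_nonneg: "\<forall>\<^sub>F n in F. ys n \<in> {0..}"
    using ev by eventually_elim (simp add: argmins_def)
  have "0 \<le> y" by (rule tendsto_lowerbound[OF ys _ F]) (use ev_nonneg in \<open>simp add: eventually_mono\<close>)
  have lim: "((\<lambda>n. Phi (ys n) (xs n)) \<longlongrightarrow> Phi y x) F"
    unfolding Phi_def using \<open>0 \<le> y\<close> ev_nonneg
    by (intro tendsto_intros xs continuous_on_tendsto_compose[OF continuous_A ys]
        continuous_on_tendsto_compose[OF continuous_M ys]) auto
  have "Phi y x \<le> Phi y' x" if "0 \<le> y'" for y'
  proof (rule tendsto_le[OF F _ lim])
    show "((\<lambda>n. Phi y' (xs n)) \<longlongrightarrow> Phi y' x) F" unfolding Phi_def by (intro tendsto_intros xs)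
    show "\<forall>\<^sub>F n in F. Phi (ys n) (xs n) \<le> Phi y' (xs n)"
      using ev by eventually_elim (use that argmins_minimal in blast)
  qed
  then show ?thesis using argmins_iff[OF x] \<open>0 \<le> y\<close> by blast
qed

lemma hi_right_limit: assumes "x \<in> D" shows "(hi \<longlongrightarrow> hi x) (at x within {x<..} \<inter> D)"
proof (cases "at x within {x<..} \<inter> D = bot")
  case False
  let ?F = "at x within {x<..} \<inter> D"
  have ev: "\<forall>\<^sub>F z in ?F. z \<in> {x<..} \<inter> D" by (simp add: eventually_at_filter)
  have "(hi \<longlongrightarrow> Inf (hi ` ({x<..} \<inter> D))) ?F"
    by (rule Lim_right_bound[where K = "hi x"]) (use assms in \<open>auto intro: hi_mono\<close>)
  then obtain L where L: "(hi \<longlongrightarrow> L) ?F" ..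
  have "hi x \<le> L"
    by (rule tendsto_lowerbound[OF L _ False]) (use ev in \<open>eventually_elim, use assms hi_mono in auto\<close>)
  moreover have "L \<in> argmins x"
    by (rule argmins_closed_graph[OF assms False tendsto_ident_at L])
      (use ev in \<open>eventually_elim, simp add: hi_in_argmins\<close>)
  then have "L \<le> hi x" using hi_ge[OF assms] by blast
  ultimately show ?thesis using L by simp
qed simp

lemma lo_right_limit: assumes "x \<in> D" shows "(lo \<longlongrightarrow> hi x) (at x within {x<..} \<inter> D)"
proof (rule tendsto_sandwich[OF _ _ tendsto_const hi_right_limit[OF assms]])
  have ev: "\<forall>\<^sub>F z in at x within {x<..} \<inter> D. z \<in> {x<..} \<inter> D" by (simp add: eventually_at_filter)
  show "\<forall>\<^sub>F z in at x within {x<..} \<inter> D. hi x \<le> lo z"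
    using ev by eventually_elim (use assms hi_le_lo in auto)
  show "\<forall>\<^sub>F z in at x within {x<..} \<inter> D. lo z \<le> hi z"
    using ev by eventually_elim (use lo_le_hi in auto)
qed

lemma lo_left_limit: assumes "x \<in> D" shows "(lo \<longlongrightarrow> lo x) (at x within {..<x} \<inter> D)"
proof (cases "at x within {..<x} \<inter> D = bot")
  case False
  let ?F = "at x within {..<x} \<inter> D"
  have ev: "\<forall>\<^sub>F z in ?F. z \<in> {..<x} \<inter> D" by (simp add: eventually_at_filter)
  have "(lo \<longlongrightarrow> Sup (lo ` ({..<x} \<inter> D))) ?F"
    by (rule Lim_left_bound[where K = "lo x"]) (use assms in \<open>auto intro: lo_mono\<close>)
  then obtain L where L: "(lo \<longlongrightarrow> L) ?F" ..
  have "L \<le> lo x"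
    by (rule tendsto_upperbound[OF L _ False]) (use ev in \<open>eventually_elim, use assms lo_mono in auto\<close>)
  moreover have "L \<in> argmins x"
    by (rule argmins_closed_graph[OF assms False tendsto_ident_at L])
      (use ev in \<open>eventually_elim, simp add: lo_in_argmins\<close>)
  then have "lo x \<le> L" by (rule lo_le)
  ultimately show ?thesis using L by simp
qed simp

lemma hi_left_limit: assumes "x \<in> D" shows "(hi \<longlongrightarrow> lo x) (at x within {..<x} \<inter> D)"
proof (rule tendsto_sandwich[OF _ _ lo_left_limit[OF assms] tendsto_const])
  have ev: "\<forall>\<^sub>F z in at x within {..<x} \<inter> D. z \<in> {..<x} \<inter> D" by (simp add: eventually_at_filter)
  show "\<forall>\<^sub>F z in at x within {..<x} \<inter> D. lo z \<le> hi z"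
    using ev by eventually_elim (use lo_le_hi in auto)
  show "\<forall>\<^sub>F z in at x within {..<x} \<inter> D. hi z \<le> lo x"
    using ev by eventually_elim (use assms hi_le_lo in auto)
qed

end

section \<open>Locally bounded data on the half-line\<close>

lemma continuous_on_integral_from_0:
  fixes f :: "real \<Rightarrow> real"
  assumes "\<And>b. f integrable_on {0..b}"
  shows "continuous_on UNIV (\<lambda>y. integral {0..y} f)"
proof -
  have "continuous_on {0..} (\<lambda>y. integral {0..y} f)"
    unfolding continuous_on_eq_continuous_within
  proof
    fix x :: real assume "x \<in> {0..}"
    then have "continuous (at x within {0..x + 1}) (\<lambda>y. integral {0..y} f)"
      using indefinite_integral_continuous_1[OF assms[of "x + 1"]]
      by (simp add: continuous_on_eq_continuous_within)
    moreover have "at x within {0..} = at x within {0..x + 1}"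
      by (rule at_within_nhd[of _ "{..<x + 1}"]) auto
    ultimately show "continuous (at x within {0..}) (\<lambda>y. integral {0..y} f)" by simp
  qed
  moreover have "continuous_on {..0} (\<lambda>y. integral {0..y} f)"
  proof (rule continuous_on_eq[OF continuous_on_const])
    show "0 = integral {0..y} f" if "y \<in> {..0}" for y
      using that by (cases "y = 0") auto
  qed
  ultimately have "continuous_on ({..0} \<union> {0..}) (\<lambda>y. integral {0..y} f)"
    by (intro continuous_on_closed_Un) auto
  moreover have "{..0} \<union> {0..} = (UNIV :: real set)" by auto
  ultimately show ?thesis by simp
qed

definition loc_bdd_borel :: "(real \<Rightarrow> real) \<Rightarrow> bool" where
  "loc_bdd_borel f \<longleftrightarrow> (\<lambda>x. if 0 \<le> x then f x else 0) \<in> borel_measurable borel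
     \<and> (\<forall>b. \<exists>B. \<forall>x\<in>{0..b}. \<bar>f x\<bar> \<le> B)"

lemma loc_bdd_borelI:
  assumes "set_borel_measurable borel {0..} f" "\<And>b. \<exists>B. \<forall>x\<in>{0..b}. \<bar>f x\<bar> \<le> B"
  shows "loc_bdd_borel f"
proof -
  have "(\<lambda>x. indicator {0..} x *\<^sub>R f x) = (\<lambda>x. if 0 \<le> x then f x else 0)"
    by (auto simp: indicator_def)
  then show ?thesis using assms unfolding loc_bdd_borel_def set_borel_measurable_def by simp
qed

lemma loc_bdd_borel_set_borel_measurable_nonneg:
  "loc_bdd_borel f \<Longrightarrow> set_borel_measurable borel {0..} f"
proof -
  have "(\<lambda>x. indicator {0..} x *\<^sub>R f x) = (\<lambda>x. if 0 \<le> x then f x else 0)"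
    by (auto simp: indicator_def)
  then show "loc_bdd_borel f \<Longrightarrow> set_borel_measurable borel {0..} f"
    unfolding loc_bdd_borel_def set_borel_measurable_def by simp
qed

lemma loc_bdd_borel_const: "loc_bdd_borel (\<lambda>x. c)"
  unfolding loc_bdd_borel_def by auto

lemma loc_bdd_borel_id: "loc_bdd_borel (\<lambda>x. x)"
  unfolding loc_bdd_borel_def
proof (intro conjI allI)
  show "\<exists>B. \<forall>x\<in>{0..b}. \<bar>x\<bar> \<le> B" for b :: real by (rule exI[of _ "\<bar>b\<bar>"]) auto
qed measurable

lemma loc_bdd_borel_mult:
  assumes "loc_bdd_borel f" "loc_bdd_borel g" shows "loc_bdd_borel (\<lambda>x. f x * g x)"
proof -
  have "(\<lambda>x. if 0 \<le> x then f x * g x else 0)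
      = (\<lambda>x. (if 0 \<le> x then f x else 0) * (if 0 \<le> x then g x else 0))"
    by auto
  moreover have "(\<lambda>x. (if 0 \<le> x then f x else 0) * (if 0 \<le> x then g x else 0)) \<in> borel_measurable borel"
    using assms unfolding loc_bdd_borel_def by (intro borel_measurable_times) auto
  moreover have "\<exists>B. \<forall>x\<in>{0..b}. \<bar>f x * g x\<bar> \<le> B" for b
  proof -
    obtain B1 B2 where "\<forall>x\<in>{0..b}. \<bar>f x\<bar> \<le> B1" "\<forall>x\<in>{0..b}. \<bar>g x\<bar> \<le> B2"
      using assms unfolding loc_bdd_borel_def by metis
    then have "\<forall>x\<in>{0..b}. \<bar>f x * g x\<bar> \<le> B1 * B2"
      unfolding abs_mult by (auto intro!: mult_mono)
    then show ?thesis by blast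
  qed
  ultimately show ?thesis using assms unfolding loc_bdd_borel_def by (simp only:) blast
qed

lemma loc_bdd_borel_add:
  assumes "loc_bdd_borel f" "loc_bdd_borel g" shows "loc_bdd_borel (\<lambda>x. f x + g x)"
proof -
  have "(\<lambda>x. if 0 \<le> x then f x + g x else 0)
      = (\<lambda>x. (if 0 \<le> x then f x else 0) + (if 0 \<le> x then g x else 0))"
    by auto
  moreover have "(\<lambda>x. (if 0 \<le> x then f x else 0) + (if 0 \<le> x then g x else 0)) \<in> borel_measurable borel"
    using assms unfolding loc_bdd_borel_def by (intro borel_measurable_add) auto
  moreover have "\<exists>B. \<forall>x\<in>{0..b}. \<bar>f x + g x\<bar> \<le> B" for b
  proof -
    obtain B1 B2 where "\<forall>x\<in>{0..b}. \<bar>f x\<bar> \<le> B1" "\<forall>x\<in>{0..b}. \<bar>g x\<bar> \<le> B2"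
      using assms unfolding loc_bdd_borel_def by metis
    then have "\<forall>x\<in>{0..b}. \<bar>f x + g x\<bar> \<le> B1 + B2"
      by (fastforce intro: order_trans[OF abs_triangle_ineq] add_mono)
    then show ?thesis by blast
  qed
  ultimately show ?thesis using assms unfolding loc_bdd_borel_def by (simp only:) blast
qed

lemma loc_bdd_borel_diff:
  assumes "loc_bdd_borel f" "loc_bdd_borel g" shows "loc_bdd_borel (\<lambda>x. f x - g x)"
  using loc_bdd_borel_add[OF assms(1) loc_bdd_borel_mult[OF loc_bdd_borel_const[of "-1"] assms(2)]]
  by simp

lemma loc_bdd_borel_set_borel_measurable:
  assumes "loc_bdd_borel f" "0 \<le> a" shows "set_borel_measurable borel {a..b} f"
proof -
  have "(\<lambda>x. indicator {a..b} x *\<^sub>R f x) = (\<lambda>x. indicator {a..b} x * (if 0 \<le> x then f x else 0))"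
    using assms(2) by (auto simp: indicator_def)
  moreover have "(\<lambda>x. indicator {a..b} x * (if 0 \<le> x then f x else 0)) \<in> borel_measurable borel"
    using assms(1) unfolding loc_bdd_borel_def by (intro borel_measurable_times) auto
  ultimately show ?thesis unfolding set_borel_measurable_def by simp
qed

lemma loc_bdd_borel_set_integrable:
  assumes "loc_bdd_borel f" "0 \<le> a" shows "set_integrable lborel {a..b} f"
proof -
  obtain B where B: "\<forall>x\<in>{0..b}. \<bar>f x\<bar> \<le> B" using assms unfolding loc_bdd_borel_def by blast
  show ?thesis
  proof (rule set_integrable_bound)
    show "set_integrable lborel {a..b} (\<lambda>x. B)"
      unfolding set_integrable_def
      by (intro integrable_scaleR_left integrable_real_indicator) (auto simp: emeasure_lborel_Icc_eq)
    show "set_borel_measurable lborel {a..b} f"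
      using loc_bdd_borel_set_borel_measurable[OF assms] by (simp add: set_borel_measurable_def)
    show "AE x\<in>{a..b} in lborel. norm (f x) \<le> norm B"
      using B assms(2) by (intro AE_I2) (auto intro: order.trans[OF _ abs_ge_self])
  qed
qed

lemma loc_bdd_borel_integrable_on: "loc_bdd_borel f \<Longrightarrow> 0 \<le> a \<Longrightarrow> f integrable_on {a..b}"
  using loc_bdd_borel_set_integrable set_borel_integral_eq_integral(1) by blast

lemma loc_bdd_borel_LINT:
  "loc_bdd_borel f \<Longrightarrow> 0 \<le> a \<Longrightarrow> (LINT x:{a..b}|lborel. f x) = integral {a..b} f"
  using loc_bdd_borel_set_integrable set_borel_integral_eq_integral(2) by blast

lemma loc_bdd_borel_integral_diff:
  "loc_bdd_borel f \<Longrightarrow> 0 \<le> y1 \<Longrightarrow> y1 \<le> y2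
    \<Longrightarrow> integral {0..y2} f - integral {0..y1} f = integral {y1..y2} f"
  using Henstock_Kurzweil_Integration.integral_combine[of 0 y1 y2 f] loc_bdd_borel_integrable_on
  by fastforce

lemma loc_bdd_borel_continuous_integral:
  "loc_bdd_borel f \<Longrightarrow> continuous_on UNIV (\<lambda>y. integral {0..y} f)"
  by (rule continuous_on_integral_from_0) (simp add: loc_bdd_borel_integrable_on)

lemma loc_bdd_borel_integral_mono:
  assumes "loc_bdd_borel f" "loc_bdd_borel g" "0 \<le> a" "\<And>x. x \<in> {a..b} \<Longrightarrow> f x \<le> g x"
  shows "integral {a..b} f \<le> integral {a..b} g"
  by (rule integral_le) (use assms loc_bdd_borel_integrable_on in auto)

lemma loc_bdd_borel_integral_pos:
  assumes f: "loc_bdd_borel f" and ab: "0 \<le> a" "a < b" and pos: "\<And>x. x \<in> {a<..<b} \<Longrightarrow> 0 < f x"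
  shows "0 < integral {a..b} f"
proof -
  have int: "set_integrable lborel {a<..<b} f"
    by (rule set_integrable_subset[OF loc_bdd_borel_set_integrable[OF f ab(1), of b]]) auto
  have eq: "integral {a..b} f = integral\<^sup>L lborel (\<lambda>x. indicator {a<..<b} x *\<^sub>R f x)"
    using set_borel_integral_eq_integral(2)[OF int] integral_open_interval_real[of a b f]
    by (simp add: set_lebesgue_integral_def)
  have nonneg: "AE x in lborel. 0 \<le> indicator {a<..<b} x *\<^sub>R f x"
    using pos by (intro AE_I2) (simp add: indicator_def less_imp_le)
  have "integral {a..b} f \<noteq> 0"
  proof
    assume "integral {a..b} f = 0"
    then have "AE x in lborel. indicator {a<..<b} x *\<^sub>R f x = 0"
      using integral_nonneg_eq_0_iff_AE[OF int[unfolded set_integrable_def] nonneg] eq by simp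
    then have "AE x in lborel. x \<notin> {a<..<b}"
      by eventually_elim (use pos in \<open>fastforce simp: indicator_def\<close>)
    then have "emeasure lborel {a<..<b} = 0"
      by (subst (asm) AE_iff_measurable[of "{a<..<b}"]) auto
    then show False using ab by simp
  qed
  moreover have "0 \<le> integral {a..b} f" using eq integral_nonneg_AE[OF nonneg] by simp
  ultimately show ?thesis by simp
qed

section \<open>The minimization problems of the initial-boundary value problem\<close>

locale ibvp =
  fixes u0 ub r0 rb :: "real \<Rightarrow> real" and t B0 Bb :: real
  assumes u0_meas: "set_borel_measurable borel {0..} u0"
    and u0_bdd: "\<And>x. 0 \<le> x \<Longrightarrow> \<bar>u0 x\<bar> \<le> B0"
    and ub_meas: "set_borel_measurable borel {0..} ub"
    and ub_bdd: "\<And>x. 0 \<le> x \<Longrightarrow> \<bar>ub x\<bar> \<le> Bb"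
    and ub_pos: "\<And>x. 0 \<le> x \<Longrightarrow> 0 < ub x"
    and r0_meas: "set_borel_measurable borel {0..} r0"
    and r0_pos: "\<And>x. 0 \<le> x \<Longrightarrow> 0 < r0 x"
    and r0_locbdd: "\<And>b. \<exists>B. \<forall>x\<in>{0..b}. \<bar>r0 x\<bar> \<le> B"
    and rb_meas: "set_borel_measurable borel {0..} rb"
    and rb_pos: "\<And>x. 0 \<le> x \<Longrightarrow> 0 < rb x"
    and rb_locbdd: "\<And>b. \<exists>B. \<forall>x\<in>{0..b}. \<bar>rb x\<bar> \<le> B"
    and r0_L1: "set_integrable lborel {0..} r0"
    and t_pos: "0 < t"
    and B0_nonneg: "0 \<le> B0"
    and Bb_pos: "0 < Bb"
begin

lemma loc_bdd_borel_u0: "loc_bdd_borel u0"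
  using u0_meas u0_bdd by (intro loc_bdd_borelI) (auto intro!: exI[of _ B0])

lemma loc_bdd_borel_ub: "loc_bdd_borel ub"
  using ub_meas ub_bdd by (intro loc_bdd_borelI) (auto intro!: exI[of _ Bb])

lemma loc_bdd_borel_r0: "loc_bdd_borel r0"
  using r0_meas r0_locbdd by (intro loc_bdd_borelI) auto

lemma loc_bdd_borel_rb: "loc_bdd_borel rb"
  using rb_meas rb_locbdd by (intro loc_bdd_borelI) auto

lemmas loc_bdd_borel_intros = loc_bdd_borel_u0 loc_bdd_borel_ub loc_bdd_borel_r0 loc_bdd_borel_rb
  loc_bdd_borel_const loc_bdd_borel_id loc_bdd_borel_mult loc_bdd_borel_add loc_bdd_borel_diff

definition M :: "real \<Rightarrow> real" where "M y = integral {0..y} r0"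
definition P :: "real \<Rightarrow> real" where "P y = integral {0..y} (\<lambda>e. r0 e * u0 e)"
definition N :: "real \<Rightarrow> real" where "N y = integral {0..y} (\<lambda>e. e * r0 e)"
definition Mb :: "real \<Rightarrow> real" where "Mb y = integral {0..y} (\<lambda>e. rb e * ub e)"
definition Pb :: "real \<Rightarrow> real" where "Pb y = integral {0..y} (\<lambda>e. rb e * (ub e)\<^sup>2)"
definition Bq :: "real \<Rightarrow> real" where "Bq y = integral {0..y} (\<lambda>e. ub e * (t - e) * rb e * ub e)"

lemma loc_bdd_borel_integrands:
  "loc_bdd_borel (\<lambda>e. r0 e * u0 e)" "loc_bdd_borel (\<lambda>e. e * r0 e)"
  "loc_bdd_borel (\<lambda>e. rb e * ub e)" "loc_bdd_borel (\<lambda>e. rb e * (ub e)\<^sup>2)"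
  "loc_bdd_borel (\<lambda>e. ub e * (t - e) * rb e * ub e)"
  by (intro loc_bdd_borel_intros | simp add: power2_eq_square)+

lemma continuous_on_cumulative:
  "continuous_on A M" "continuous_on A P" "continuous_on A N"
  "continuous_on A Mb" "continuous_on A Pb" "continuous_on A Bq"
  unfolding M_def P_def N_def Mb_def Pb_def Bq_def
  using loc_bdd_borel_integrands loc_bdd_borel_r0
  by (auto intro: continuous_on_subset[OF loc_bdd_borel_continuous_integral])

lemma cumulative_0: "M 0 = 0" "P 0 = 0" "N 0 = 0" "Mb 0 = 0" "Pb 0 = 0" "Bq 0 = 0"
  by (simp_all add: M_def P_def N_def Mb_def Pb_def Bq_def)

lemma LINT_cumulative:
  assumes "0 \<le> a" "a \<le> b"
  shows "(LINT e:{a..b}|lborel. r0 e) = M b - M a"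
    and "(LINT e:{a..b}|lborel. r0 e * u0 e) = P b - P a"
    and "(LINT e:{a..b}|lborel. rb e * ub e) = Mb b - Mb a"
    and "(LINT e:{a..b}|lborel. rb e * (ub e)\<^sup>2) = Pb b - Pb a"
  using assms loc_bdd_borel_integrands loc_bdd_borel_r0
  by (simp_all add: M_def P_def Mb_def Pb_def loc_bdd_borel_LINT loc_bdd_borel_integral_diff)

lemma integral_F_integrand:
  assumes "0 \<le> y"
  shows "integral {0..y} (\<lambda>e. (t * u0 e + e - x) * r0 e) = t * P y + N y - x * M y"
proof -
  have "(\<lambda>e. (t * u0 e + e - x) * r0 e) = (\<lambda>e. t * (r0 e * u0 e) + e * r0 e - x * r0 e)"
    by (auto simp: algebra_simps)
  moreover have "(\<lambda>e. r0 e * u0 e) integrable_on {0..y}" "(\<lambda>e. e * r0 e) integrable_on {0..y}"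
      "r0 integrable_on {0..y}"
    using loc_bdd_borel_integrands loc_bdd_borel_r0 assms by (auto intro: loc_bdd_borel_integrable_on)
  then have "((\<lambda>e. t * (r0 e * u0 e) + e * r0 e - x * r0 e) has_integral (t * P y + N y - x * M y)) {0..y}"
    unfolding M_def P_def N_def
    by (intro has_integral_diff has_integral_add has_integral_mult_right integrable_integral)
  ultimately show ?thesis by (simp add: integral_unique)
qed

lemma integral_G_integrand:
  assumes "0 \<le> y"
  shows "integral {0..y} (\<lambda>e. (x - ub e * (t - e)) * rb e * ub e) = x * Mb y - Bq y"
proof -
  have "(\<lambda>e. (x - ub e * (t - e)) * rb e * ub e) = (\<lambda>e. x * (rb e * ub e) - ub e * (t - e) * rb e * ub e)"
    by (auto simp: algebra_simps)
  moreover have "(\<lambda>e. rb e * ub e) integrable_on {0..y}"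
      "(\<lambda>e. ub e * (t - e) * rb e * ub e) integrable_on {0..y}"
    using loc_bdd_borel_integrands assms by (auto intro: loc_bdd_borel_integrable_on)
  then have "((\<lambda>e. x * (rb e * ub e) - ub e * (t - e) * rb e * ub e) has_integral (x * Mb y - Bq y)) {0..y}"
    unfolding Mb_def Bq_def by (intro has_integral_diff has_integral_mult_right integrable_integral)
  ultimately show ?thesis by (simp add: integral_unique)
qed

lemma loc_bdd_borel_F_integrand: "loc_bdd_borel (\<lambda>e. (t * u0 e + e - x) * r0 e)"
  by (intro loc_bdd_borel_intros)

lemma loc_bdd_borel_G_integrand: "loc_bdd_borel (\<lambda>e. (x - ub e * (t - e)) * rb e * ub e)"
  by (intro loc_bdd_borel_intros)

lemma F_increment:
  assumes "0 \<le> y1" "y1 \<le> y2"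
  shows "(t * P y2 + N y2 - x * M y2) - (t * P y1 + N y1 - x * M y1)
    = integral {y1..y2} (\<lambda>e. (t * u0 e + e - x) * r0 e)"
  using assms loc_bdd_borel_integral_diff[of "\<lambda>e. (t * u0 e + e - x) * r0 e" y1 y2]
  by (simp add: integral_F_integrand loc_bdd_borel_F_integrand)

lemma G_increment:
  assumes "0 \<le> y1" "y1 \<le> y2"
  shows "(x * Mb y2 - Bq y2) - (x * Mb y1 - Bq y1)
    = integral {y1..y2} (\<lambda>e. (x - ub e * (t - e)) * rb e * ub e)"
  using assms loc_bdd_borel_integral_diff[of "\<lambda>e. (x - ub e * (t - e)) * rb e * ub e" y1 y2]
  by (simp add: integral_G_integrand loc_bdd_borel_G_integrand)

lemma M_strict_mono: "0 \<le> y1 \<Longrightarrow> y1 < y2 \<Longrightarrow> M y1 < M y2"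
  using loc_bdd_borel_integral_pos[OF loc_bdd_borel_r0, of y1 y2] r0_pos
    loc_bdd_borel_integral_diff[OF loc_bdd_borel_r0, of y1 y2]
  by (simp add: M_def)

lemma Mb_strict_mono: "0 \<le> y1 \<Longrightarrow> y1 < y2 \<Longrightarrow> Mb y1 < Mb y2"
  using loc_bdd_borel_integral_pos[OF loc_bdd_borel_integrands(3), of y1 y2] rb_pos ub_pos
    loc_bdd_borel_integral_diff[OF loc_bdd_borel_integrands(3), of y1 y2]
  by (simp add: Mb_def)

sublocale I: potential "\<lambda>y. t * P y + N y" M "{0..}" "\<lambda>x. x + t * B0"
proof
  show "M 0 = 0" by (simp add: cumulative_0)
  show "M y1 < M y2" if "0 \<le> y1" "y1 < y2" for y1 y2 using M_strict_mono that .
  show "continuous_on {0..} (\<lambda>y. t * P y + N y)" "continuous_on {0..} M"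
    by (intro continuous_intros continuous_on_cumulative)+
  show "0 \<le> x + t * B0" if "x \<in> {0..}" for x using that t_pos B0_nonneg by simp
  fix x y1 y2 :: real assume x: "x \<in> {0..}" and y1: "x + t * B0 \<le> y1" and y12: "y1 < y2"
  have "0 \<le> y1" using x y1 t_pos B0_nonneg by (smt (verit) atLeast_iff mult_nonneg_nonneg)
  have "0 < (t * u0 e + e - x) * r0 e" if "e \<in> {y1<..<y2}" for e
  proof -
    have "- B0 \<le> u0 e" using u0_bdd[of e] that \<open>0 \<le> y1\<close> by auto
    then have "- (t * B0) \<le> t * u0 e" using t_pos by (metis minus_mult_right mult_le_cancel_left_pos)
    then show ?thesis using r0_pos[of e] that y1 \<open>0 \<le> y1\<close> by (intro mult_pos_pos) auto
  qed
  then have "0 < integral {y1..y2} (\<lambda>e. (t * u0 e + e - x) * r0 e)"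
    using \<open>0 \<le> y1\<close> y12 by (intro loc_bdd_borel_integral_pos[OF loc_bdd_borel_F_integrand]) auto
  then show "t * P y1 + N y1 - x * M y1 < t * P y2 + N y2 - x * M y2"
    using F_increment[OF \<open>0 \<le> y1\<close>, of y2 x] y12 by simp
qed

text \<open>\<open>G(\<tau>, x, t)\<close> is the potential \<open>B.Phi \<tau> (- x)\<close>: the boundary problem is treated in the
  variable \<open>-x\<close>, so that both problems have the form \<open>A y - x M y\<close> with \<open>M\<close> increasing.\<close>

sublocale B: potential "\<lambda>y. - Bq y" Mb "{..0}" "\<lambda>_. t"
proof
  show "Mb 0 = 0" by (simp add: cumulative_0)
  show "Mb y1 < Mb y2" if "0 \<le> y1" "y1 < y2" for y1 y2 using Mb_strict_mono that .
  show "continuous_on {0..} (\<lambda>y. - Bq y)" "continuous_on {0..} Mb"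
    by (intro continuous_intros continuous_on_cumulative)+
  show "0 \<le> t" using t_pos by simp
  fix x y1 y2 :: real assume x: "x \<in> {..0}" and y1: "t \<le> y1" and y12: "y1 < y2"
  have "0 \<le> y1" using y1 t_pos by simp
  have "0 < (- x - ub e * (t - e)) * rb e * ub e" if "e \<in> {y1<..<y2}" for e
  proof -
    have "ub e * (t - e) < 0" using ub_pos[of e] that y1 \<open>0 \<le> y1\<close> by (auto intro!: mult_pos_neg)
    then show ?thesis using x rb_pos[of e] ub_pos[of e] that \<open>0 \<le> y1\<close> by (auto intro!: mult_pos_pos)
  qed
  then have "0 < integral {y1..y2} (\<lambda>e. (- x - ub e * (t - e)) * rb e * ub e)"
    using \<open>0 \<le> y1\<close> y12 by (intro loc_bdd_borel_integral_pos[OF loc_bdd_borel_G_integrand]) auto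
  then show "- Bq y1 - x * Mb y1 < - Bq y2 - x * Mb y2"
    using G_increment[OF \<open>0 \<le> y1\<close>, of y2 "-x"] y12 by simp
qed

lemma I_Phi: "I.Phi y x = t * P y + N y - x * M y"
  by (simp add: I.Phi_def)

lemma B_Phi: "B.Phi y (- x) = x * Mb y - Bq y"
  by (simp add: B.Phi_def)

lemma Fy_eq: "0 \<le> y \<Longrightarrow> Fy u0 r0 y x t = I.Phi y x"
  unfolding Fy_def I_Phi by (simp add: loc_bdd_borel_LINT[OF loc_bdd_borel_F_integrand] integral_F_integrand)

lemma Gy_eq: "0 \<le> y \<Longrightarrow> Gy ub rb y x t = B.Phi y (- x)"
  unfolding Gy_def B_Phi by (simp add: loc_bdd_borel_LINT[OF loc_bdd_borel_G_integrand] integral_G_integrand)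

lemma Fm_eq: "Fm u0 r0 x t = I.Phi_min x"
  unfolding Fm_def I.Phi_min_def by (intro arg_cong[where f = Inf] image_cong) (auto simp: Fy_eq)

lemma Gm_eq: "Gm ub rb x t = B.Phi_min (- x)"
  unfolding Gm_def B.Phi_min_def by (intro arg_cong[where f = Inf] image_cong) (auto simp: Gy_eq)

lemma ylo_eq: "ylo u0 r0 x t = I.lo x" and yhi_eq: "yhi u0 r0 x t = I.hi x"
proof -
  have "{y. 0 \<le> y \<and> Fy u0 r0 y x t = Fm u0 r0 x t} = I.argmins x"
    unfolding I.argmins_def Fm_eq by (auto simp: Fy_eq)
  then show "ylo u0 r0 x t = I.lo x" "yhi u0 r0 x t = I.hi x"
    unfolding ylo_def yhi_def I.lo_def I.hi_def by simp_all
qed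

lemma tlo_eq: "tlo ub rb x t = B.lo (- x)" and thi_eq: "thi ub rb x t = B.hi (- x)"
proof -
  have "{y. 0 \<le> y \<and> Gy ub rb y x t = Gm ub rb x t} = B.argmins (- x)"
    unfolding B.argmins_def Gm_eq by (auto simp: Gy_eq)
  then show "tlo ub rb x t = B.lo (- x)" "thi ub rb x t = B.hi (- x)"
    unfolding tlo_def thi_def B.lo_def B.hi_def by simp_all
qed


lemma I_argmins_lower_bound:
  assumes x: "0 \<le> x" and y: "y \<in> I.argmins x" shows "x - t * B0 \<le> y"
proof (rule ccontr)
  define y' where "y' = x - t * B0"
  assume "\<not> x - t * B0 \<le> y"
  then have yy: "y < y'" by (simp add: y'_def)
  have y0: "0 \<le> y" using I.argmins_nonneg[OF y] .
  have "0 < (x - t * u0 e - e) * r0 e" if "e \<in> {y<..<y'}" for e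
  proof -
    have "t * u0 e \<le> t * B0" using u0_bdd[of e] t_pos y0 that by (intro mult_left_mono) auto
    then show ?thesis using r0_pos[of e] that y0 by (intro mult_pos_pos) (auto simp: y'_def)
  qed
  then have "0 < integral {y..y'} (\<lambda>e. (x - t * u0 e - e) * r0 e)"
    using y0 yy by (intro loc_bdd_borel_integral_pos) (intro loc_bdd_borel_intros, auto)
  also have "integral {y..y'} (\<lambda>e. (x - t * u0 e - e) * r0 e)
      = - integral {y..y'} (\<lambda>e. (t * u0 e + e - x) * r0 e)"
    by (subst integral_neg[symmetric]) (auto simp: algebra_simps intro!: arg_cong[where f = "integral _"])
  also have "\<dots> = I.Phi y x - I.Phi y' x"
    using F_increment[OF y0, of y' x] yy by (simp add: I_Phi)
  finally have "I.Phi y' x < I.Phi y x" by simp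
  moreover have "I.Phi y x \<le> I.Phi y' x" using I.argmins_minimal[OF _ y] x y0 yy by simp
  ultimately show False by simp
qed

lemma B_argmins_le_t: "y \<in> B.argmins (- x) \<Longrightarrow> 0 \<le> x \<Longrightarrow> y \<le> t"
  using B.argmins_le_R[of "- x" y] by simp

lemma B_argmins_speed_bound:
  assumes x: "0 \<le> x" and y: "y \<in> B.argmins (- x)" and ypos: "0 < y" shows "x \<le> Bb * (t - y)"
proof (rule ccontr)
  assume "\<not> x \<le> Bb * (t - y)"
  then have xb: "Bb * (t - y) < x" by simp
  have "0 \<le> Bb * (t - y)" using B_argmins_le_t[OF y x] Bb_pos by simp
  then have "0 < x" using xb by linarith
  define y' where "y' = max 0 (t - x / Bb)"
  have "t - y < x / Bb" using xb by (subst pos_less_divide_eq[OF Bb_pos]) (simp add: mult.commute)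
  then have y'y: "y' < y" using ypos by (auto simp: y'_def)
  have "0 < (x - ub e * (t - e)) * rb e * ub e" if e: "e \<in> {y'<..<y}" for e
  proof -
    have e0: "0 \<le> e" using e by (auto simp: y'_def)
    have "ub e * (t - e) < x"
    proof (cases "e \<le> t")
      case True
      have "ub e * (t - e) \<le> Bb * (t - e)" using ub_bdd[OF e0] True by (intro mult_right_mono) auto
      also have "\<dots> < Bb * (x / Bb)" using e Bb_pos by (intro mult_strict_left_mono) (auto simp: y'_def)
      finally show ?thesis using Bb_pos by simp
    next
      case False
      then have "ub e * (t - e) \<le> 0" using ub_pos[OF e0] by (intro mult_nonneg_nonpos) auto
      then show ?thesis using \<open>0 < x\<close> by simp
    qed
    then show ?thesis using rb_pos[OF e0] ub_pos[OF e0] by (intro mult_pos_pos) auto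
  qed
  then have "0 < integral {y'..y} (\<lambda>e. (x - ub e * (t - e)) * rb e * ub e)"
    using y'y by (intro loc_bdd_borel_integral_pos[OF loc_bdd_borel_G_integrand]) (auto simp: y'_def)
  then have "B.Phi y' (- x) < B.Phi y (- x)"
    using G_increment[of y' y x] y'y by (simp add: B_Phi y'_def)
  moreover have "B.Phi y (- x) \<le> B.Phi y' (- x)"
    using B.argmins_minimal[OF _ y] x by (simp add: y'_def)
  ultimately show False by simp
qed

lemma B_argmins_less_t: assumes "0 < x" "y \<in> B.argmins (- x)" shows "y < t"
proof (cases "y = 0")
  case False
  then have "0 < y" using B.argmins_nonneg[OF assms(2)] by simp
  then have "0 < Bb * (t - y)"
    using B_argmins_speed_bound[OF less_imp_le[OF assms(1)] assms(2)] assms(1) by force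
  then show ?thesis using Bb_pos by (simp add: zero_less_mult_iff)
qed (use t_pos in simp)

lemma B_argmins_0: "B.argmins 0 = {t}"
proof -
  have B_Phi_0: "B.Phi y 0 = - Bq y" for y by (simp add: B.Phi_def)
  have less: "B.Phi t 0 < B.Phi y 0" if "0 \<le> y" "y \<noteq> t" for y
  proof (cases "y < t")
    case True
    have "0 < integral {y..t} (\<lambda>e. ub e * (t - e) * rb e * ub e)"
      using that True rb_pos ub_pos
      by (intro loc_bdd_borel_integral_pos[OF loc_bdd_borel_integrands(5)]) (auto intro!: mult_pos_pos)
    moreover have "Bq t - Bq y = integral {y..t} (\<lambda>e. ub e * (t - e) * rb e * ub e)"
      unfolding Bq_def using that True by (intro loc_bdd_borel_integral_diff[OF loc_bdd_borel_integrands(5)]) auto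
    ultimately show ?thesis by (simp add: B_Phi_0)
  next
    case False
    then have "t < y" using that by simp
    have "0 < (0 - ub e * (t - e)) * rb e * ub e" if "e \<in> {t<..<y}" for e
    proof -
      have "ub e * (t - e) < 0" using ub_pos[of e] that t_pos by (intro mult_pos_neg) auto
      then show ?thesis using rb_pos[of e] ub_pos[of e] that t_pos by (intro mult_pos_pos) auto
    qed
    then have "0 < integral {t..y} (\<lambda>e. (0 - ub e * (t - e)) * rb e * ub e)"
      using \<open>t < y\<close> t_pos by (intro loc_bdd_borel_integral_pos[OF loc_bdd_borel_G_integrand]) auto
    then show ?thesis using G_increment[of t y 0] \<open>t < y\<close> t_pos by (simp add: B_Phi_0)
  qed
  have "t \<in> B.argmins 0"
    using B.argmins_iff[of 0 t] t_pos less by (auto simp: le_less)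
  moreover have "y = t" if "y \<in> B.argmins 0" for y
    using less[of y] B.argmins_minimal[OF _ that, of t] B.argmins_nonneg[OF that] t_pos
    by (cases "y = t") auto
  ultimately show ?thesis by blast
qed

lemma B_lo_0: "B.lo 0 = t" and B_hi_0: "B.hi 0 = t"
  using B.lo_in_argmins[of 0] B.hi_in_argmins[of 0] B_argmins_0 by simp_all

definition gap :: "real \<Rightarrow> real" where "gap x = I.Phi_min x - B.Phi_min (- x)"

lemma Fm_minus_Gm: "Fm u0 r0 x t - Gm ub rb x t = gap x"
  by (simp add: Fm_eq Gm_eq gap_def)

lemma gap_antimono: "antimono_on {0..} gap"
proof (rule monotone_onI)
  fix x1 x2 :: real assume "x1 \<in> {0..}" "x2 \<in> {0..}" "x1 \<le> x2"
  then show "gap x2 \<le> gap x1"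
    unfolding gap_def using I.Phi_min_antimono[of x1 x2] B.Phi_min_antimono[of "- x2" "- x1"] by simp
qed

lemma gap_decrement_le:
  assumes "0 \<le> x1" "x1 \<le> x2" "x2 \<le> b"
  shows "gap x1 - gap x2 \<le> (x2 - x1) * (M (b + t * B0) + Mb t)"
proof -
  have "I.Phi_min x1 - I.Phi_min x2 \<le> (x2 - x1) * M (x2 + t * B0)"
    using I.Phi_min_decrement_le[of x1 x2] assms by simp
  also have "\<dots> \<le> (x2 - x1) * M (b + t * B0)"
    using assms t_pos B0_nonneg by (intro mult_left_mono I.M_mono) auto
  finally have "I.Phi_min x1 - I.Phi_min x2 \<le> (x2 - x1) * M (b + t * B0)" .
  moreover have "B.Phi_min (- x2) - B.Phi_min (- x1) \<le> (x2 - x1) * Mb t"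
    using B.Phi_min_decrement_le[of "- x2" "- x1"] assms by simp
  ultimately show ?thesis unfolding gap_def by (simp add: algebra_simps)
qed

lemma lipschitz_on_gap:
  assumes "0 \<le> b" shows "(M (b + t * B0) + Mb t)-lipschitz_on {0..b} gap"
proof (rule lipschitz_onI)
  show "0 \<le> M (b + t * B0) + Mb t"
    using I.M_nonneg[of "b + t * B0"] B.M_nonneg[of t] t_pos B0_nonneg assms by simp
next
  have *: "\<bar>gap x - gap y\<bar> \<le> (M (b + t * B0) + Mb t) * \<bar>x - y\<bar>"
    if "x \<in> {0..b}" "y \<in> {0..b}" "x \<le> y" for x y
  proof -
    have "gap y \<le> gap x" using monotone_onD[OF gap_antimono, of x y] that by simp
    moreover have "gap x - gap y \<le> (y - x) * (M (b + t * B0) + Mb t)"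
      using gap_decrement_le[of x y b] that by simp
    ultimately show ?thesis using that by (simp add: mult.commute)
  qed
  fix x y :: real assume "x \<in> {0..b}" "y \<in> {0..b}"
  then show "dist (gap x) (gap y) \<le> (M (b + t * B0) + Mb t) * dist x y"
    using *[of x y] *[of y x] by (cases "x \<le> y") (auto simp: dist_real_def abs_minus_commute)
qed

lemma continuous_on_gap: "continuous_on {0..b} gap"
  using lipschitz_on_continuous_on[OF lipschitz_on_gap[of b]] by (cases "0 \<le> b") auto

lemma B_Phi_min_nonneg: assumes "Bb * t \<le> x" shows "0 \<le> B.Phi_min (- x)"
proof -
  have "0 \<le> x" using assms mult_pos_pos[OF Bb_pos t_pos] by linarith
  have "B.Phi_min (- x) = B.Phi 0 (- x)"
  proof (rule B.Phi_min_eq)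
    fix y :: real assume y: "0 \<le> y"
    have "ub e * (t - e) \<le> x" if "e \<in> {0..y}" for e
    proof (cases "e \<le> t")
      case True
      then have "ub e * (t - e) \<le> Bb * t" using ub_bdd[of e] ub_pos[of e] that t_pos by (intro mult_mono) auto
      then show ?thesis using assms by simp
    next
      case False
      then have "ub e * (t - e) \<le> 0" using ub_pos[of e] that by (intro mult_nonneg_nonpos) auto
      then show ?thesis using \<open>0 \<le> x\<close> by simp
    qed
    then have "0 \<le> (x - ub e * (t - e)) * rb e * ub e" if "e \<in> {0..y}" for e
      using rb_pos[of e] ub_pos[of e] that by (intro mult_nonneg_nonneg) auto
    then have "0 \<le> integral {0..y} (\<lambda>e. (x - ub e * (t - e)) * rb e * ub e)"
      using loc_bdd_borel_integrable_on[OF loc_bdd_borel_G_integrand] by (intro integral_nonneg) auto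
    then show "B.Phi 0 (- x) \<le> B.Phi y (- x)"
      using integral_G_integrand[OF y] by (simp add: B_Phi cumulative_0)
  qed simp
  then show ?thesis by (simp add: B_Phi cumulative_0)
qed

lemma gap_eventually_nonpos: "\<exists>X\<ge>0. gap X \<le> 0"
proof -
  have M1: "0 < M 1" using M_strict_mono[of 0 1] by (simp add: cumulative_0)
  define X where "X = max (Bb * t) (\<bar>t * P 1 + N 1\<bar> / M 1)"
  have "I.Phi_min X \<le> t * P 1 + N 1 - X * M 1"
    using I.Phi_min_le[of X 1] Bb_pos t_pos by (simp add: I_Phi X_def le_max_iff_disj)
  also have "\<dots> \<le> 0"
  proof -
    have "\<bar>t * P 1 + N 1\<bar> / M 1 \<le> X" by (simp add: X_def)
    then have "\<bar>t * P 1 + N 1\<bar> \<le> X * M 1" by (simp add: pos_divide_le_eq[OF M1])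
    then show ?thesis by linarith
  qed
  finally have "I.Phi_min X \<le> 0" .
  moreover have "0 \<le> B.Phi_min (- X)" by (rule B_Phi_min_nonneg) (simp add: X_def)
  moreover have "0 \<le> X" using Bb_pos t_pos by (simp add: X_def le_max_iff_disj)
  ultimately show ?thesis unfolding gap_def by (intro exI[of _ X]) auto
qed

text \<open>The interface \<open>x0\<close> separates the region \<open>x > x0\<close>, where the solution is determined by
  the initial data, from the region \<open>x < x0\<close>, where it is determined by the boundary data.\<close>

definition x0 :: real where "x0 = Inf {x. 0 \<le> x \<and> gap x \<le> 0}"

lemma
  shows x0_nonneg: "0 \<le> x0"
    and gap_pos_below_x0: "\<And>x. 0 \<le> x \<Longrightarrow> x < x0 \<Longrightarrow> 0 < gap x"
    and gap_nonpos_from_x0: "\<And>x. x0 \<le> x \<Longrightarrow> gap x \<le> 0"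
    and gap_x0: "0 < x0 \<Longrightarrow> gap x0 = 0"
proof -
  obtain X where X: "0 \<le> X" "gap X \<le> 0" using gap_eventually_nonpos by blast
  note threshold = gap_antimono continuous_on_gap X
  show "0 \<le> x0"
    using antimono_threshold_nonneg[OF threshold] by (simp add: x0_def)
  show "0 < gap x" if "0 \<le> x" "x < x0" for x
    using antimono_threshold_below[OF threshold] that by (simp add: x0_def)
  show "gap x \<le> 0" if "x0 \<le> x" for x
    using antimono_threshold_above[OF threshold] that by (simp add: x0_def)
  show "0 < x0 \<Longrightarrow> gap x0 = 0"
    using antimono_threshold_zero[OF threshold] by (simp add: x0_def)
qed

lemma x0_pos_iff: "0 < x0 \<longleftrightarrow> 0 < gap 0"
  using gap_pos_below_x0[of 0] gap_nonpos_from_x0[of 0] x0_nonneg by force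

lemma argmins_at_zero_gap_beyond_x0:
  assumes "x0 < x" "gap x = 0" shows "B.hi (- x) = 0" "I.lo x = 0"
proof -
  define x' where "x' = (x0 + x) / 2"
  have xx: "x0 < x'" "x' < x" "0 \<le> x'" using assms x0_nonneg by (auto simp: x'_def)
  have "I.Phi_min x \<le> I.Phi_min x'" using I.Phi_min_antimono[of x' x] xx by simp
  moreover have "B.Phi_min (- x') \<le> B.Phi_min (- x)" using B.Phi_min_antimono[of "- x" "- x'"] xx by simp
  moreover have "gap x' \<le> 0" using gap_nonpos_from_x0[of x'] xx by simp
  ultimately have eqs: "I.Phi_min x' = I.Phi_min x" "B.Phi_min (- x') = B.Phi_min (- x)"
    using assms(2) unfolding gap_def by linarith+
  have hB: "B.hi (- x) \<in> B.argmins (- x)" using B.hi_in_argmins[of "- x"] xx by simp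
  have "B.Phi_min (- x') \<le> B.Phi_min (- x) - (x - x') * Mb (B.hi (- x))"
    using B.Phi_min_step[of "- x'" "B.hi (- x)" "- x"] hB xx by simp
  then have "(x - x') * Mb (B.hi (- x)) \<le> 0" using eqs by simp
  then have "Mb (B.hi (- x)) \<le> 0" using xx by (simp add: mult_le_0_iff)
  then show "B.hi (- x) = 0"
    using Mb_strict_mono[of 0 "B.hi (- x)"] B.argmins_nonneg[OF hB] by (force simp: cumulative_0)
  have hI: "I.hi x' \<in> I.argmins x'" using I.hi_in_argmins[of x'] xx by simp
  have "I.Phi_min x \<le> I.Phi_min x' - (x - x') * M (I.hi x')"
    using I.Phi_min_step[of x "I.hi x'" x'] hI xx by simp
  then have "(x - x') * M (I.hi x') \<le> 0" using eqs by simp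
  then have "M (I.hi x') \<le> 0" using xx by (simp add: mult_le_0_iff)
  then have "I.hi x' = 0"
    using M_strict_mono[of 0 "I.hi x'"] I.argmins_nonneg[OF hI] by (force simp: cumulative_0)
  then have "I.Phi_min x = I.Phi 0 x"
    using I.Phi_min_argmin[OF hI] eqs by (simp add: I_Phi cumulative_0)
  then have "0 \<in> I.argmins x" by (simp add: I.argmins_def)
  then show "I.lo x = 0" using I.lo_le[of 0 x] I.lo_nonneg[of x] xx by simp
qed

lemma B_hi_pos_below_x0: assumes "0 < x" "x < x0" shows "0 < B.hi (- x)"
proof (rule ccontr)
  assume "\<not> 0 < B.hi (- x)"
  then have "B.hi (- x) = 0" using B.hi_nonneg[of "- x"] assms by simp
  then have "B.Phi_min (- x) = 0"
    using B.Phi_min_argmin[OF B.hi_in_argmins[of "- x"]] assms by (simp add: B_Phi cumulative_0)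
  moreover have "I.Phi_min x \<le> 0" using I.Phi_min_le[of x 0] assms by (simp add: I_Phi cumulative_0)
  moreover have "0 < gap x" using gap_pos_below_x0 assms by simp
  ultimately show False by (simp add: gap_def)
qed


section \<open>Velocity and cumulative mass\<close>

abbreviation u :: "real \<Rightarrow> real" where "u x \<equiv> vel u0 ub r0 rb x t"

abbreviation m :: "real \<Rightarrow> real" where "m x \<equiv> mass u0 ub r0 rb x t"

definition u_init :: "real \<Rightarrow> real" where
  "u_init x = (if I.lo x = I.hi x then (x - I.lo x) / t
     else (P (I.hi x) - P (I.lo x)) / (M (I.hi x) - M (I.lo x)))"

definition u_bdry :: "real \<Rightarrow> real" where
  "u_bdry x = (if B.lo (- x) = B.hi (- x) then x / (t - B.lo (- x))
     else (Pb (B.hi (- x)) - Pb (B.lo (- x))) / (Mb (B.hi (- x)) - Mb (B.lo (- x))))"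

lemma ue_eq: "ue u0 ub r0 rb x t = (Pb (B.hi (- x)) + P (I.hi x)) / (Mb (B.hi (- x)) + M (I.hi x))"
  unfolding ue_def thi_eq yhi_eq Pb_def P_def Mb_def M_def
  using loc_bdd_borel_integrands loc_bdd_borel_r0 by (simp add: loc_bdd_borel_LINT)

lemma u_pos_eq:
  assumes "0 < x"
  shows "u x = (if gap x < 0 then u_init x else if 0 < gap x then u_bdry x
     else if I.hi x \<noteq> 0 \<or> B.hi (- x) \<noteq> 0
       then (Pb (B.hi (- x)) + P (I.hi x)) / (Mb (B.hi (- x)) + M (I.hi x)) else x / t)"
proof -
  have x: "x \<in> {0..}" "- x \<in> {..0}" using assms by auto
  note lo_le_hi = I.lo_nonneg[OF x(1)] I.lo_le_hi[OF x(1)] B.lo_nonneg[OF x(2)] B.lo_le_hi[OF x(2)]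
  show ?thesis
    unfolding vel_def Let_def Fm_eq Gm_eq ylo_eq yhi_eq tlo_eq thi_eq ue_eq u_init_def u_bdry_def
      gap_def LINT_cumulative[OF lo_le_hi(1,2)] LINT_cumulative[OF lo_le_hi(3,4)]
    using assms by auto
qed

lemma u_beyond_x0: assumes "0 < x" "x0 < x" shows "u x = u_init x"
proof (cases "gap x = 0")
  case True
  then have "B.hi (- x) = 0" "I.lo x = 0" using argmins_at_zero_gap_beyond_x0 assms(2) by auto
  then show ?thesis using u_pos_eq[OF assms(1)] True by (auto simp: u_init_def cumulative_0)
next
  case False
  then show ?thesis using u_pos_eq[OF assms(1)] gap_nonpos_from_x0[of x] assms(2) by simp
qed

lemma u_below_x0: "0 < x \<Longrightarrow> x < x0 \<Longrightarrow> u x = u_bdry x"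
  using u_pos_eq gap_pos_below_x0[of x] by simp

lemma M_Mb_hi_pos:
  assumes "x \<in> {0..}" "I.hi x \<noteq> 0 \<or> B.hi (- x) \<noteq> 0" shows "0 < M (I.hi x) + Mb (B.hi (- x))"
proof -
  have "0 \<le> I.hi x" "0 \<le> B.hi (- x)" using I.hi_nonneg B.hi_nonneg assms(1) by auto
  then show ?thesis
    using assms(2) M_strict_mono[of 0 "I.hi x"] Mb_strict_mono[of 0 "B.hi (- x)"]
      I.M_nonneg[of "I.hi x"] B.M_nonneg[of "B.hi (- x)"] by (auto simp: cumulative_0)
qed

lemma u_x0:
  assumes "0 < x0"
  shows "u x0 * (M (I.hi x0) + Mb (B.hi (- x0))) = P (I.hi x0) + Pb (B.hi (- x0))"
proof (cases "I.hi x0 \<noteq> 0 \<or> B.hi (- x0) \<noteq> 0")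
  case True
  then have "0 < M (I.hi x0) + Mb (B.hi (- x0))" using M_Mb_hi_pos x0_nonneg by simp
  then show ?thesis using u_pos_eq[OF assms] gap_x0[OF assms] True by (simp add: add.commute)
qed (simp add: cumulative_0)

lemma u_0_neg_gap: "gap 0 < 0 \<Longrightarrow> u 0 = 0"
  unfolding vel_def Let_def Fm_eq Gm_eq gap_def by auto

lemma u_0_zero_gap: assumes "gap 0 = 0" shows "u 0 * (M (I.hi 0) + Mb t) = P (I.hi 0) + Pb t"
proof -
  have "0 < M (I.hi 0) + Mb t" using M_Mb_hi_pos[of 0] t_pos by (simp add: B_hi_0)
  moreover have "u 0 = (Pb t + P (I.hi 0)) / (Mb t + M (I.hi 0))"
    unfolding vel_def Let_def Fm_eq Gm_eq using assms by (simp add: gap_def ue_eq B_hi_0)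
  ultimately show ?thesis by (simp add: add.commute)
qed

lemma m_pos_eq: "0 < x \<Longrightarrow> m x = (if x < x0 then - Mb (B.lo (- x)) else M (I.lo x))"
  unfolding mass_def Fm_eq Gm_eq ylo_eq tlo_eq
  using gap_pos_below_x0[of x] gap_nonpos_from_x0[of x] I.lo_nonneg[of x] B.lo_nonneg[of "- x"]
  by (auto simp: gap_def LINT_cumulative cumulative_0)

lemma m_0: "m 0 = - Mb t"
  unfolding mass_def tlo_eq using t_pos by (simp add: B_lo_0 LINT_cumulative cumulative_0)


lemma isCont_cumulative: "isCont M y" "isCont P y" "isCont Mb y" "isCont Pb y"
  using continuous_on_cumulative[of UNIV] by (simp_all add: continuous_on_eq_continuous_at)

lemma I_hi_tendsto_right: "0 \<le> x \<Longrightarrow> (I.hi \<longlongrightarrow> I.hi x) (at_right x)"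
  using I.hi_right_limit[of x] by (simp add: Int_absorb2 subset_eq)

lemma I_lo_tendsto_right: "0 \<le> x \<Longrightarrow> (I.lo \<longlongrightarrow> I.hi x) (at_right x)"
  using I.lo_right_limit[of x] by (simp add: Int_absorb2 subset_eq)

lemma I_hi_tendsto_left: assumes "0 < x" shows "(I.hi \<longlongrightarrow> I.lo x) (at_left x)"
proof -
  have "at x within {..<x} \<inter> {0..} = at_left x"
    by (rule at_within_nhd[of _ "{0<..}"]) (use assms in auto)
  then show ?thesis using I.hi_left_limit[of x] assms by simp
qed

lemma B_lo_tendsto_right: assumes "0 \<le> x" shows "((\<lambda>z. B.lo (- z)) \<longlongrightarrow> B.lo (- x)) (at_right x)"
proof -
  have "{..< - x} \<inter> {..0} = {..< - x}" using assms by auto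
  then have "(B.lo \<longlongrightarrow> B.lo (- x)) (at_left (- x))" using B.lo_left_limit[of "- x"] assms by simp
  then show ?thesis unfolding at_left_minus filterlim_filtermap by simp
qed

lemma B_lo_tendsto_left: assumes "0 < x" shows "((\<lambda>z. B.lo (- z)) \<longlongrightarrow> B.hi (- x)) (at_left x)"
proof -
  have "at (- x) within {- x<..} \<inter> {..0} = at_right (- x)"
    by (rule at_within_nhd[of _ "{..<0}"]) (use assms in auto)
  then have "(B.lo \<longlongrightarrow> B.hi (- x)) (at_right (- x))" using B.lo_right_limit[of "- x"] assms by simp
  then show ?thesis unfolding at_right_minus filterlim_filtermap by simp
qed

text \<open>Right-continuous versions of the cumulative mass \<open>m\<close> and of the cumulative momentum,
  with their left limits.\<close>

definition cmass :: "real \<Rightarrow> real" where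
  "cmass x = (if x < x0 then - Mb (B.lo (- x)) else M (I.hi x))"

definition cmass_left :: "real \<Rightarrow> real" where
  "cmass_left x = (if x \<le> x0 then - Mb (B.hi (- x)) else M (I.lo x))"

definition cmom :: "real \<Rightarrow> real" where
  "cmom x = (if x < x0 then - Pb (B.lo (- x)) else P (I.hi x))"

definition cmom_left :: "real \<Rightarrow> real" where
  "cmom_left x = (if x \<le> x0 then - Pb (B.hi (- x)) else P (I.lo x))"

lemma cumulative_tendsto_right:
  assumes "0 \<le> x"
  shows "(cmass \<longlongrightarrow> cmass x) (at_right x)" "(m \<longlongrightarrow> cmass x) (at_right x)"
    and "(cmom \<longlongrightarrow> cmom x) (at_right x)"
proof -
  have "(cmass \<longlongrightarrow> cmass x) (at_right x) \<and> (m \<longlongrightarrow> cmass x) (at_right x)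
      \<and> (cmom \<longlongrightarrow> cmom x) (at_right x)"
  proof (cases "x0 \<le> x")
    case True
    have "\<forall>\<^sub>F z in at_right x. M (I.hi z) = cmass z \<and> M (I.lo z) = m z \<and> P (I.hi z) = cmom z"
      using True assms by (auto simp: eventually_at_right_field cmass_def cmom_def m_pos_eq intro: exI[of _ "x + 1"])
    moreover have "((\<lambda>z. M (I.hi z)) \<longlongrightarrow> cmass x) (at_right x)" "((\<lambda>z. M (I.lo z)) \<longlongrightarrow> cmass x) (at_right x)"
        "((\<lambda>z. P (I.hi z)) \<longlongrightarrow> cmom x) (at_right x)"
      using True isCont_tendsto_compose[OF isCont_cumulative(1) I_hi_tendsto_right[OF assms]]
        isCont_tendsto_compose[OF isCont_cumulative(1) I_lo_tendsto_right[OF assms]]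
        isCont_tendsto_compose[OF isCont_cumulative(2) I_hi_tendsto_right[OF assms]]
      by (simp_all add: cmass_def cmom_def)
    ultimately show ?thesis unfolding eventually_conj_iff by (blast intro: Lim_transform_eventually)
  next
    case False
    have "\<forall>\<^sub>F z in at_right x. - Mb (B.lo (- z)) = cmass z \<and> - Mb (B.lo (- z)) = m z
        \<and> - Pb (B.lo (- z)) = cmom z"
      using False assms by (auto simp: eventually_at_right_field cmass_def cmom_def m_pos_eq intro: exI[of _ x0])
    moreover have "((\<lambda>z. - Mb (B.lo (- z))) \<longlongrightarrow> cmass x) (at_right x)"
        "((\<lambda>z. - Pb (B.lo (- z))) \<longlongrightarrow> cmom x) (at_right x)"
      using False isCont_tendsto_compose[OF isCont_cumulative(3) B_lo_tendsto_right[OF assms]]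
        isCont_tendsto_compose[OF isCont_cumulative(4) B_lo_tendsto_right[OF assms]]
      by (auto simp: cmass_def cmom_def intro: tendsto_minus)
    ultimately show ?thesis unfolding eventually_conj_iff by (blast intro: Lim_transform_eventually)
  qed
  then show "(cmass \<longlongrightarrow> cmass x) (at_right x)" "(m \<longlongrightarrow> cmass x) (at_right x)"
      "(cmom \<longlongrightarrow> cmom x) (at_right x)" by auto
qed

lemma cmass_tendsto_left: assumes "0 < x" shows "(cmass \<longlongrightarrow> cmass_left x) (at_left x)"
proof (cases "x0 < x")
  case True
  have "\<forall>\<^sub>F z in at_left x. M (I.hi z) = cmass z"
    using True by (auto simp: eventually_at_left_field cmass_def intro: exI[of _ x0])
  moreover have "((\<lambda>z. M (I.hi z)) \<longlongrightarrow> cmass_left x) (at_left x)"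
    using True isCont_tendsto_compose[OF isCont_cumulative(1) I_hi_tendsto_left[OF assms]]
    by (simp add: cmass_left_def)
  ultimately show ?thesis by (blast intro: Lim_transform_eventually)
next
  case False
  have "\<forall>\<^sub>F z in at_left x. - Mb (B.lo (- z)) = cmass z"
    using False by (auto simp: eventually_at_left_field cmass_def intro: exI[of _ "x - 1"])
  moreover have "((\<lambda>z. - Mb (B.lo (- z))) \<longlongrightarrow> cmass_left x) (at_left x)"
    using False isCont_tendsto_compose[OF isCont_cumulative(3) B_lo_tendsto_left[OF assms]]
    by (auto simp: cmass_left_def intro: tendsto_minus)
  ultimately show ?thesis by (blast intro: Lim_transform_eventually)
qed

lemma massR_eq: "0 \<le> x \<Longrightarrow> massR u0 ub r0 rb x t = cmass x"
  unfolding massR_def by (rule tendsto_Lim[OF trivial_limit_at_right_real cumulative_tendsto_right(2)])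

lemma cmass_mono: assumes "0 \<le> x1" "x1 \<le> x2" shows "cmass x1 \<le> cmass x2"
proof -
  have neg: "- Mb (B.lo (- x)) \<le> 0" if "0 \<le> x" for x
    using B.M_nonneg[OF B.lo_nonneg[of "- x"]] that by simp
  have pos: "0 \<le> M (I.hi x)" if "0 \<le> x" for x
    using I.M_nonneg[OF I.hi_nonneg[of x]] that by simp
  consider "x2 < x0" | "x1 < x0" "x0 \<le> x2" | "x0 \<le> x1" using assms by linarith
  then show ?thesis
  proof cases
    case 1
    then have "Mb (B.lo (- x2)) \<le> Mb (B.lo (- x1))"
      using B.lo_mono[of "- x2" "- x1"] B.lo_nonneg[of "- x2"] assms by (intro B.M_mono) auto
    then show ?thesis using 1 assms by (simp add: cmass_def)
  next
    case 2
    then show ?thesis using neg[of x1] pos[of x2] assms by (simp add: cmass_def)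
  next
    case 3
    then have "M (I.hi x1) \<le> M (I.hi x2)"
      using I.hi_mono[of x1 x2] I.hi_nonneg[of x1] assms by (intro I.M_mono) auto
    then show ?thesis using 3 assms by (simp add: cmass_def)
  qed
qed

definition Mt :: real where "Mt = (LINT x:{0..}|lborel. r0 x)"

definition Pt :: real where "Pt = (LINT x:{0..}|lborel. r0 x * u0 x)"

lemma r0_u0_integrable: "set_integrable lborel {0..} (\<lambda>x. r0 x * u0 x)"
proof (rule set_integrable_bound[OF set_integrable_mult_right[OF r0_L1, of B0]])
  have "set_borel_measurable borel {0..} (\<lambda>x. r0 x * u0 x)"
    using loc_bdd_borel_integrands(1) by (rule loc_bdd_borel_set_borel_measurable_nonneg)
  then show "set_borel_measurable lborel {0..} (\<lambda>x. r0 x * u0 x)"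
    unfolding set_borel_measurable_def by simp
  show "AE x\<in>{0..} in lborel. norm (r0 x * u0 x) \<le> norm (B0 * r0 x)"
  proof (intro AE_I2 impI)
    fix x :: real assume "x \<in> {0..}"
    then have "\<bar>u0 x\<bar> \<le> B0" "0 < r0 x" using u0_bdd r0_pos by auto
    then show "norm (r0 x * u0 x) \<le> norm (B0 * r0 x)"
      using B0_nonneg by (simp add: abs_mult mult.commute mult_left_mono)
  qed
qed

lemma integral_tendsto_LINT_at_top:
  assumes "set_integrable lborel {0..} f" "loc_bdd_borel f"
  shows "((\<lambda>y. integral {0..y} f) \<longlongrightarrow> (LINT x:{0..}|lborel. f x)) at_top"
proof -
  have "((\<lambda>b. LINT x:{0..b}|lborel. f x) \<longlongrightarrow> (LINT x:{0..}|lborel. f x)) at_top"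
    by (rule tendsto_set_lebesgue_integral_at_top) (auto intro: assms(1))
  moreover have "\<forall>\<^sub>F b in at_top. (LINT x:{0..b}|lborel. f x) = integral {0..b} f"
    using assms(2) by (auto simp: eventually_at_top_linorder loc_bdd_borel_LINT intro!: exI[of _ 0])
  ultimately show ?thesis by (rule Lim_transform_eventually)
qed

lemma cmass_at_top: "(cmass \<longlongrightarrow> Mt) at_top" and cmom_at_top: "(cmom \<longlongrightarrow> Pt) at_top"
proof -
  have "filterlim I.hi at_top at_top"
  proof (rule filterlim_at_top_mono)
    show "filterlim (\<lambda>z. - (t * B0) + z) at_top at_top"
      by (rule filterlim_tendsto_add_at_top[OF tendsto_const filterlim_ident])
    show "\<forall>\<^sub>F z in at_top. - (t * B0) + z \<le> I.hi z"
      using I_argmins_lower_bound[OF _ I.lo_in_argmins] I.lo_le_hi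
      by (auto simp: eventually_at_top_linorder intro!: exI[of _ 0] intro: order.trans)
  qed
  moreover have "\<forall>\<^sub>F z in at_top. M (I.hi z) = cmass z \<and> P (I.hi z) = cmom z"
    by (auto simp: eventually_at_top_linorder cmass_def cmom_def intro!: exI[of _ x0])
  moreover have "(M \<longlongrightarrow> Mt) at_top" "(P \<longlongrightarrow> Pt) at_top"
    unfolding M_def P_def Mt_def Pt_def using r0_L1 r0_u0_integrable loc_bdd_borel_r0 loc_bdd_borel_integrands(1)
    by (auto intro: integral_tendsto_LINT_at_top)
  ultimately have "((\<lambda>z. M (I.hi z)) \<longlongrightarrow> Mt) at_top" "((\<lambda>z. P (I.hi z)) \<longlongrightarrow> Pt) at_top"
      "\<forall>\<^sub>F z in at_top. M (I.hi z) = cmass z \<and> P (I.hi z) = cmom z"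
    by (auto intro: filterlim_compose)
  then show "(cmass \<longlongrightarrow> Mt) at_top" "(cmom \<longlongrightarrow> Pt) at_top"
    unfolding eventually_conj_iff by (blast intro: Lim_transform_eventually)+
qed


section \<open>The measure rho and the velocity bounds\<close>

abbreviation rho :: "real measure" where "rho \<equiv> rhoLS u0 ub r0 rb t"

lemma rho_eq: "rho = interval_measure (\<lambda>x. cmass (max x 0))"
  unfolding rhoLS_def by (simp add: massR_eq)

lemma
  shows distribution_rho_mono: "\<And>x y. x \<le> y \<Longrightarrow> cmass (max x 0) \<le> cmass (max y 0)"
    and distribution_rho_right_cont: "\<And>a. continuous (at_right a) (\<lambda>x. cmass (max x 0))"
    and distribution_rho_at_bot: "((\<lambda>x. cmass (max x 0)) \<longlongrightarrow> cmass 0) at_bot"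
    and distribution_rho_at_top: "((\<lambda>x. cmass (max x 0)) \<longlongrightarrow> Mt) at_top"
proof -
  show "cmass (max x 0) \<le> cmass (max y 0)" if "x \<le> y" for x y
    using that by (intro cmass_mono) auto
  show "continuous (at_right a) (\<lambda>x. cmass (max x 0))" for a
  proof (cases "a < 0")
    case True
    have "\<forall>\<^sub>F x in at_right a. cmass 0 = cmass (max x 0)"
      using True by (auto simp: eventually_at_right_field intro!: exI[of _ 0])
    then show ?thesis unfolding continuous_within using True
      by (intro Lim_transform_eventually[OF tendsto_const]) auto
  next
    case False
    have "\<forall>\<^sub>F x in at_right a. cmass x = cmass (max x 0)"
      using False by (auto simp: eventually_at_right_field intro!: exI[of _ "a + 1"])
    then have "((\<lambda>x. cmass (max x 0)) \<longlongrightarrow> cmass a) (at_right a)"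
      using False by (intro Lim_transform_eventually[OF cumulative_tendsto_right(1)]) auto
    then show ?thesis unfolding continuous_within using False by simp
  qed
  have "\<forall>\<^sub>F x in at_bot. cmass 0 = cmass (max x 0)"
    by (auto simp: eventually_at_bot_linorder intro!: exI[of _ 0])
  then show "((\<lambda>x. cmass (max x 0)) \<longlongrightarrow> cmass 0) at_bot"
    by (rule Lim_transform_eventually[OF tendsto_const])
  have "\<forall>\<^sub>F x in at_top. cmass x = cmass (max x 0)"
    by (auto simp: eventually_at_top_linorder intro!: exI[of _ 0])
  then show "((\<lambda>x. cmass (max x 0)) \<longlongrightarrow> Mt) at_top"
    by (rule Lim_transform_eventually[OF cmass_at_top])
qed

lemmas distribution_rho = distribution_rho_mono distribution_rho_right_cont
  distribution_rho_at_bot distribution_rho_at_top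

sublocale rho: finite_borel_measure rho
  unfolding rho_eq by (rule finite_borel_measure_interval_measure_bounded[OF distribution_rho])

lemma cdf_rho: "cdf rho x = cmass (max x 0) - cmass 0"
  unfolding rho_eq by (rule cdf_interval_measure_bounded[OF distribution_rho])

lemma measure_rho_Ioc: "0 \<le> c \<Longrightarrow> c \<le> x \<Longrightarrow> measure rho {c<..x} = cmass x - cmass c"
  using rho.cdf_diff_eq[of c x] by (cases "c = x") (auto simp: cdf_rho)

lemma measure_rho_Iio: assumes "0 < x" shows "measure rho {..<x} = cmass_left x - cmass 0"
proof (rule rho.measure_Iio_cdf_left_limit)
  have "\<forall>\<^sub>F z in at_left x. cmass z - cmass 0 = cdf rho z"
    using assms by (auto simp: eventually_at_left_field cdf_rho intro!: exI[of _ 0])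
  then show "(cdf rho \<longlongrightarrow> cmass_left x - cmass 0) (at_left x)"
    by (rule Lim_transform_eventually[OF tendsto_diff[OF cmass_tendsto_left[OF assms] tendsto_const]])
qed

lemma measure_rho_Ioo: "0 \<le> c \<Longrightarrow> c < x \<Longrightarrow> measure rho {c<..<x} = cmass_left x - cmass c"
  using rho.measure_Ioo_cdf[of c x] measure_rho_Iio[of x] by (simp add: cdf_rho)

lemma measure_rho_singleton: "0 < x \<Longrightarrow> measure rho {x} = cmass x - cmass_left x"
  using rho.measure_singleton_cdf[of x] measure_rho_Iio[of x] by (simp add: cdf_rho)

lemma measure_rho_Ioi: "0 \<le> a \<Longrightarrow> measure rho {a<..} = Mt - cmass a"
  using rho.measure_Ioi_cdf[of a] measure_interval_measure_UNIV[OF distribution_rho]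
  by (simp add: cdf_rho rho.borel_UNIV flip: rho_eq)


lemma N_increment_bounds:
  assumes "0 \<le> y1" "y1 \<le> y2"
  shows "y1 * (M y2 - M y1) \<le> N y2 - N y1" "N y2 - N y1 \<le> y2 * (M y2 - M y1)"
proof -
  have N: "N y2 - N y1 = integral {y1..y2} (\<lambda>e. e * r0 e)" and M: "M y2 - M y1 = integral {y1..y2} r0"
    unfolding N_def M_def using assms loc_bdd_borel_integrands(2) loc_bdd_borel_r0
    by (simp_all add: loc_bdd_borel_integral_diff)
  have "integral {y1..y2} (\<lambda>e. y1 * r0 e) \<le> integral {y1..y2} (\<lambda>e. e * r0 e)"
    using assms r0_pos by (intro loc_bdd_borel_integral_mono loc_bdd_borel_intros)
      (auto intro!: mult_right_mono less_imp_le)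
  then show "y1 * (M y2 - M y1) \<le> N y2 - N y1" using M N by simp
  have "integral {y1..y2} (\<lambda>e. e * r0 e) \<le> integral {y1..y2} (\<lambda>e. y2 * r0 e)"
    using assms r0_pos by (intro loc_bdd_borel_integral_mono loc_bdd_borel_intros)
      (auto intro!: mult_right_mono less_imp_le)
  then show "N y2 - N y1 \<le> y2 * (M y2 - M y1)" using M N by simp
qed

lemma Bq_increment_bounds:
  assumes "0 \<le> y1" "y1 \<le> y2"
  shows "(t - y2) * (Pb y2 - Pb y1) \<le> Bq y2 - Bq y1" "Bq y2 - Bq y1 \<le> (t - y1) * (Pb y2 - Pb y1)"
proof -
  have eq: "(\<lambda>e. ub e * (t - e) * rb e * ub e) = (\<lambda>e. (t - e) * (rb e * (ub e)\<^sup>2))"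
    by (auto simp: power2_eq_square algebra_simps)
  have Bq: "Bq y2 - Bq y1 = integral {y1..y2} (\<lambda>e. (t - e) * (rb e * (ub e)\<^sup>2))"
    and Pb: "Pb y2 - Pb y1 = integral {y1..y2} (\<lambda>e. rb e * (ub e)\<^sup>2)"
    unfolding Bq_def Pb_def eq[symmetric] using assms loc_bdd_borel_integrands(4,5)
    by (simp_all add: loc_bdd_borel_integral_diff)
  have pos: "0 \<le> rb e * (ub e)\<^sup>2" if "0 \<le> e" for e using rb_pos[OF that] by simp
  have lbb: "loc_bdd_borel (\<lambda>e. c * (rb e * (ub e)\<^sup>2))" "loc_bdd_borel (\<lambda>e. (t - e) * (rb e * (ub e)\<^sup>2))"
    for c :: real
    by (rule loc_bdd_borel_mult[OF loc_bdd_borel_const loc_bdd_borel_integrands(4)],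
        rule loc_bdd_borel_mult[OF loc_bdd_borel_diff[OF loc_bdd_borel_const loc_bdd_borel_id]
          loc_bdd_borel_integrands(4)])
  have pw: "(t - y2) * (rb e * (ub e)\<^sup>2) \<le> (t - e) * (rb e * (ub e)\<^sup>2)"
    "(t - e) * (rb e * (ub e)\<^sup>2) \<le> (t - y1) * (rb e * (ub e)\<^sup>2)" if "e \<in> {y1..y2}" for e
    using that assms pos[of e] by (simp_all add: mult_right_mono)
  have "integral {y1..y2} (\<lambda>e. (t - y2) * (rb e * (ub e)\<^sup>2))
      \<le> integral {y1..y2} (\<lambda>e. (t - e) * (rb e * (ub e)\<^sup>2))"
    by (rule loc_bdd_borel_integral_mono[OF lbb(1) lbb(2) assms(1) pw(1)])
  then show "(t - y2) * (Pb y2 - Pb y1) \<le> Bq y2 - Bq y1" using Bq Pb by simp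
  have "integral {y1..y2} (\<lambda>e. (t - e) * (rb e * (ub e)\<^sup>2))
      \<le> integral {y1..y2} (\<lambda>e. (t - y1) * (rb e * (ub e)\<^sup>2))"
    by (rule loc_bdd_borel_integral_mono[OF lbb(2) lbb(1) assms(1) pw(2)])
  then show "Bq y2 - Bq y1 \<le> (t - y1) * (Pb y2 - Pb y1)" using Bq Pb by simp
qed

text \<open>Between two minimizers the mean velocity \<open>(P y2 - P y1) / (M y2 - M y1)\<close> lies between the
  characteristic speeds; all velocity bounds below come from this.\<close>

lemma I_momentum_bounds:
  assumes x: "0 \<le> x1" "0 \<le> x2" and y: "y1 \<in> I.argmins x1" "y2 \<in> I.argmins x2" "y1 \<le> y2"
  shows "(x1 - y2) * (M y2 - M y1) \<le> t * (P y2 - P y1)"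
    and "t * (P y2 - P y1) \<le> (x2 - y1) * (M y2 - M y1)"
proof -
  have A: "x1 * (M y2 - M y1) \<le> t * (P y2 - P y1) + (N y2 - N y1)"
      "t * (P y2 - P y1) + (N y2 - N y1) \<le> x2 * (M y2 - M y1)"
    using I.argmins_increment_bounds[OF _ _ y(1,2)] x by (simp_all add: right_diff_distrib)
  note N = N_increment_bounds[OF I.argmins_nonneg[OF y(1)] y(3)]
  show "(x1 - y2) * (M y2 - M y1) \<le> t * (P y2 - P y1)"
    unfolding left_diff_distrib[of x1 y2] using A(1) N(2) by linarith
  show "t * (P y2 - P y1) \<le> (x2 - y1) * (M y2 - M y1)"
    unfolding left_diff_distrib[of x2 y1] using A(2) N(1) by linarith
qed

lemma B_momentum_bounds:
  assumes x: "0 \<le> x1" "0 \<le> x2" and y: "y1 \<in> B.argmins (- x1)" "y2 \<in> B.argmins (- x2)" "y2 \<le> y1"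
  shows "x1 * (Mb y1 - Mb y2) \<le> (t - y2) * (Pb y1 - Pb y2)"
    and "(t - y1) * (Pb y1 - Pb y2) \<le> x2 * (Mb y1 - Mb y2)"
proof -
  have A: "x1 * (Mb y1 - Mb y2) \<le> Bq y1 - Bq y2" "Bq y1 - Bq y2 \<le> x2 * (Mb y1 - Mb y2)"
    using B.argmins_increment_bounds[of "- x2" "- x1" y2 y1] x y by (simp_all add: algebra_simps)
  note Bq = Bq_increment_bounds[OF B.argmins_nonneg[OF y(2)] y(3)]
  show "x1 * (Mb y1 - Mb y2) \<le> (t - y2) * (Pb y1 - Pb y2)" using A(1) Bq(2) by linarith
  show "(t - y1) * (Pb y1 - Pb y2) \<le> x2 * (Mb y1 - Mb y2)" using A(2) Bq(1) by linarith
qed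

lemma u_init_bounds:
  assumes x: "0 \<le> x" shows "(x - I.hi x) / t \<le> u_init x" "u_init x \<le> (x - I.lo x) / t"
proof -
  have xD: "x \<in> {0..}" using x by simp
  have "(x - I.hi x) / t \<le> u_init x \<and> u_init x \<le> (x - I.lo x) / t"
  proof (cases "I.lo x = I.hi x")
    case False
    then have "I.lo x < I.hi x" using I.lo_le_hi[OF xD] by simp
    then have dM: "0 < M (I.hi x) - M (I.lo x)" using M_strict_mono[OF I.lo_nonneg[OF xD]] by simp
    have "(x - I.hi x) * (M (I.hi x) - M (I.lo x)) \<le> t * (P (I.hi x) - P (I.lo x))"
        "t * (P (I.hi x) - P (I.lo x)) \<le> (x - I.lo x) * (M (I.hi x) - M (I.lo x))"
      using I_momentum_bounds[OF x x I.lo_in_argmins I.hi_in_argmins I.lo_le_hi] xD by auto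
    then show ?thesis using False dM t_pos by (simp add: u_init_def field_simps)
  qed (simp add: u_init_def)
  then show "(x - I.hi x) / t \<le> u_init x" "u_init x \<le> (x - I.lo x) / t" by auto
qed

lemma u_bdry_bounds:
  assumes x: "0 < x" shows "x / (t - B.lo (- x)) \<le> u_bdry x" "u_bdry x \<le> x / (t - B.hi (- x))"
proof -
  have xD: "- x \<in> {..0}" using x by simp
  have lh: "B.lo (- x) \<le> B.hi (- x)" using B.lo_le_hi[OF xD] .
  have ht: "B.hi (- x) < t" using B_argmins_less_t[OF x B.hi_in_argmins[OF xD]] .
  have "x / (t - B.lo (- x)) \<le> u_bdry x \<and> u_bdry x \<le> x / (t - B.hi (- x))"
  proof (cases "B.lo (- x) = B.hi (- x)")
    case False
    then have "B.lo (- x) < B.hi (- x)" using lh by simp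
    then have dM: "0 < Mb (B.hi (- x)) - Mb (B.lo (- x))" using Mb_strict_mono[OF B.lo_nonneg[OF xD]] by simp
    have "x * (Mb (B.hi (- x)) - Mb (B.lo (- x))) \<le> (t - B.lo (- x)) * (Pb (B.hi (- x)) - Pb (B.lo (- x)))"
        "(t - B.hi (- x)) * (Pb (B.hi (- x)) - Pb (B.lo (- x))) \<le> x * (Mb (B.hi (- x)) - Mb (B.lo (- x)))"
      using B_momentum_bounds[of x x "B.hi (- x)" "B.lo (- x)"] x B.lo_in_argmins[OF xD]
        B.hi_in_argmins[OF xD] lh by auto
    moreover have "0 < t - B.lo (- x)" "0 < t - B.hi (- x)" using ht lh by auto
    ultimately show ?thesis using False dM by (simp add: u_bdry_def field_simps)
  qed (simp add: u_bdry_def)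
  then show "x / (t - B.lo (- x)) \<le> u_bdry x" "u_bdry x \<le> x / (t - B.hi (- x))" by auto
qed

lemma u_init_abs: assumes "0 \<le> x" shows "\<bar>u_init x\<bar> \<le> B0"
proof -
  have xD: "x \<in> {0..}" using assms by simp
  have "x - t * B0 \<le> I.lo x" using I_argmins_lower_bound[OF assms I.lo_in_argmins[OF xD]] .
  moreover have "I.hi x \<le> x + t * B0" using I.hi_le_R[OF xD] by simp
  ultimately have "- B0 \<le> (x - I.hi x) / t" "(x - I.lo x) / t \<le> B0"
    using t_pos by (simp_all add: field_simps)
  then show ?thesis using u_init_bounds[OF assms] by (simp add: abs_le_iff)
qed

lemma u_bdry_abs: assumes "0 < x" "x < x0" shows "\<bar>u_bdry x\<bar> \<le> Bb"
proof -
  have xD: "- x \<in> {..0}" using assms by simp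
  have "x \<le> Bb * (t - B.hi (- x))"
    using B_argmins_speed_bound[OF _ B.hi_in_argmins[OF xD] B_hi_pos_below_x0[OF assms]] assms by simp
  moreover have "B.hi (- x) < t" using B_argmins_less_t[OF assms(1) B.hi_in_argmins[OF xD]] .
  moreover have "B.lo (- x) \<le> B.hi (- x)" using B.lo_le_hi[OF xD] .
  ultimately have "0 \<le> x / (t - B.lo (- x))" "x / (t - B.hi (- x)) \<le> Bb"
    using assms by (simp_all add: field_simps)
  then show ?thesis using u_bdry_bounds[OF assms(1)] by (simp add: abs_le_iff)
qed

definition u_bound :: real where "u_bound = B0 + Bb + \<bar>u x0\<bar>"

lemma u_bounded: assumes "0 < z" shows "\<bar>u z\<bar> \<le> u_bound"
proof -
  consider "z < x0" | "z = x0" | "x0 < z" by linarith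
  then show ?thesis
  proof cases
    case 1
    then show ?thesis using u_below_x0[OF assms 1] u_bdry_abs[OF assms 1] B0_nonneg
      by (simp add: u_bound_def)
  next
    case 3
    then show ?thesis using u_beyond_x0[OF assms 3] u_init_abs[of z] assms Bb_pos
      by (simp add: u_bound_def)
  qed (use B0_nonneg Bb_pos in \<open>simp add: u_bound_def\<close>)
qed

lemma borel_measurable_cumulative [measurable]:
  "M \<in> borel_measurable borel" "P \<in> borel_measurable borel"
  "Mb \<in> borel_measurable borel" "Pb \<in> borel_measurable borel"
  using continuous_on_cumulative by (auto intro: borel_measurable_continuous_onI)

lemma borel_measurable_argmins [measurable]:
  "(\<lambda>z. I.lo (max z 0)) \<in> borel_measurable borel" "(\<lambda>z. I.hi (max z 0)) \<in> borel_measurable borel"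
  "(\<lambda>z. B.lo (- max z 0)) \<in> borel_measurable borel" "(\<lambda>z. B.hi (- max z 0)) \<in> borel_measurable borel"
proof -
  show "(\<lambda>z. I.lo (max z 0)) \<in> borel_measurable borel" "(\<lambda>z. I.hi (max z 0)) \<in> borel_measurable borel"
    by (auto simp: mono_def intro!: borel_measurable_mono I.lo_mono I.hi_mono)
  have "mono (\<lambda>z. - B.lo (- max z 0))" "mono (\<lambda>z. - B.hi (- max z 0))"
    unfolding mono_def using B.lo_mono B.hi_mono by (auto simp: neg_le_iff_le)
  then have "(\<lambda>z. - B.lo (- max z 0)) \<in> borel_measurable borel" "(\<lambda>z. - B.hi (- max z 0)) \<in> borel_measurable borel"
    using borel_measurable_mono by blast+
  then show "(\<lambda>z. B.lo (- max z 0)) \<in> borel_measurable borel" "(\<lambda>z. B.hi (- max z 0)) \<in> borel_measurable borel"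
    by simp_all
qed

lemma u_measurable: "set_borel_measurable rho {0<..} u"
proof -
  define w where "w z = (if z < x0 then u_bdry (max z 0) else if z = x0 then u x0 else u_init (max z 0))" for z
  have "w \<in> borel_measurable borel"
    unfolding w_def u_bdry_def u_init_def by measurable
  then have "(\<lambda>z. indicator {0<..} z *\<^sub>R w z) \<in> borel_measurable borel" by simp
  moreover have "w z = u z" if "0 < z" for z
    using that u_below_x0[of z] u_beyond_x0[of z] by (auto simp: w_def)
  then have "(\<lambda>z. indicator {0<..} z *\<^sub>R w z) = (\<lambda>z. indicator {0<..} z *\<^sub>R u z)"
    by (simp add: indicator_def fun_eq_iff)
  ultimately show ?thesis
    unfolding set_borel_measurable_def measurable_cong_sets[OF rho.M_is_borel refl] by simp
qed

lemma u_integrable: "A \<in> sets borel \<Longrightarrow> A \<subseteq> {0<..} \<Longrightarrow> set_integrable rho A u"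
proof -
  have "set_integrable rho {0<..} u"
    unfolding set_integrable_def
  proof (rule rho.integrable_const_bound[where B = u_bound])
    show "AE z in rho. norm (indicator {0<..} z *\<^sub>R u z) \<le> u_bound"
      using u_bounded B0_nonneg Bb_pos by (intro AE_I2) (auto simp: indicator_def u_bound_def)
    show "(\<lambda>z. indicator {0<..} z *\<^sub>R u z) \<in> borel_measurable rho"
      using u_measurable unfolding set_borel_measurable_def .
  qed
  then show "A \<in> sets borel \<Longrightarrow> A \<subseteq> {0<..} \<Longrightarrow> set_integrable rho A u"
    by (rule set_integrable_subset) auto
qed


section \<open>Momentum of intervals\<close>

lemma left_piece_init:
  assumes cx: "x0 < c" "c < x"
  shows "\<bar>(LINT z:{c<..<x}|rho. u z) - (cmom_left x - cmom c)\<bar>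
    \<le> ((x - c) + (I.lo x - I.hi c)) / t * measure rho {c<..<x}"
proof -
  have c0: "0 < c" using cx x0_nonneg by simp
  have D: "c \<in> {0..}" "x \<in> {0..}" using c0 cx by auto
  have m: "measure rho {c<..<x} = M (I.lo x) - M (I.hi c)"
    using measure_rho_Ioo[of c x] c0 cx by (simp add: cmass_left_def cmass_def)
  have q: "cmom_left x - cmom c = P (I.lo x) - P (I.hi c)" using cx by (simp add: cmom_left_def cmom_def)
  have mo: "(c - I.lo x) * (M (I.lo x) - M (I.hi c)) \<le> t * (P (I.lo x) - P (I.hi c))"
      "t * (P (I.lo x) - P (I.hi c)) \<le> (x - I.hi c) * (M (I.lo x) - M (I.hi c))"
    using I_momentum_bounds[OF _ _ I.hi_in_argmins I.lo_in_argmins I.hi_le_lo] D cx by auto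
  have "\<bar>(LINT z:{c<..<x}|rho. u z) - (cmom_left x - cmom c)\<bar>
      \<le> ((x - I.hi c) / t - (c - I.lo x) / t) * measure rho {c<..<x}"
  proof (rule rho.set_integral_sandwich[OF u_integrable])
    fix z assume z: "z \<in> {c<..<x}"
    then have zD: "z \<in> {0..}" "0 < z" "x0 < z" using c0 cx by auto
    have "I.hi c \<le> I.lo z" "I.hi z \<le> I.lo x" using I.hi_le_lo D zD z by auto
    then have "(c - I.lo x) / t \<le> (z - I.hi z) / t" "(z - I.lo z) / t \<le> (x - I.hi c) / t"
      using t_pos z by (auto intro: divide_right_mono)
    then show "(c - I.lo x) / t \<le> u z \<and> u z \<le> (x - I.hi c) / t"
      using u_init_bounds[of z] u_beyond_x0[OF zD(2,3)] zD by auto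
  next
    show "(c - I.lo x) / t * measure rho {c<..<x} \<le> cmom_left x - cmom c"
      "cmom_left x - cmom c \<le> (x - I.hi c) / t * measure rho {c<..<x}"
      unfolding m q using mo t_pos by (simp_all add: field_simps)
  qed (use c0 in auto)
  also have "(x - I.hi c) / t - (c - I.lo x) / t = ((x - c) + (I.lo x - I.hi c)) / t"
    by (simp add: diff_divide_distrib[symmetric] algebra_simps)
  finally show ?thesis .
qed

lemma right_piece_init:
  assumes xe: "x0 \<le> x" "0 < x" "x < e"
  shows "\<bar>(LINT z:{x<..e}|rho. u z) - (cmom e - cmom x)\<bar>
    \<le> ((e - x) + (I.hi e - I.hi x)) / t * measure rho {x<..e}"
proof -
  have D: "x \<in> {0..}" "e \<in> {0..}" using xe by auto
  have m: "measure rho {x<..e} = M (I.hi e) - M (I.hi x)"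
    using measure_rho_Ioc[of x e] xe by (simp add: cmass_def)
  have q: "cmom e - cmom x = P (I.hi e) - P (I.hi x)" using xe by (simp add: cmom_def)
  have mo: "(x - I.hi e) * (M (I.hi e) - M (I.hi x)) \<le> t * (P (I.hi e) - P (I.hi x))"
      "t * (P (I.hi e) - P (I.hi x)) \<le> (e - I.hi x) * (M (I.hi e) - M (I.hi x))"
    using I_momentum_bounds[OF _ _ I.hi_in_argmins I.hi_in_argmins I.hi_mono] D xe by auto
  have "\<bar>(LINT z:{x<..e}|rho. u z) - (cmom e - cmom x)\<bar>
      \<le> ((e - I.hi x) / t - (x - I.hi e) / t) * measure rho {x<..e}"
  proof (rule rho.set_integral_sandwich[OF u_integrable])
    fix z assume z: "z \<in> {x<..e}"
    then have zD: "z \<in> {0..}" "0 < z" "x0 < z" using xe by auto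
    have "I.hi x \<le> I.lo z" "I.hi z \<le> I.hi e" using I.hi_le_lo I.hi_mono D zD z by auto
    then have "(x - I.hi e) / t \<le> (z - I.hi z) / t" "(z - I.lo z) / t \<le> (e - I.hi x) / t"
      using t_pos z by (auto intro: divide_right_mono)
    then show "(x - I.hi e) / t \<le> u z \<and> u z \<le> (e - I.hi x) / t"
      using u_init_bounds[of z] u_beyond_x0[OF zD(2,3)] zD by auto
  next
    show "(x - I.hi e) / t * measure rho {x<..e} \<le> cmom e - cmom x"
      "cmom e - cmom x \<le> (e - I.hi x) / t * measure rho {x<..e}"
      unfolding m q using mo t_pos by (simp_all add: field_simps)
  qed (use xe in auto)
  also have "(e - I.hi x) / t - (x - I.hi e) / t = ((e - x) + (I.hi e - I.hi x)) / t"
    by (simp add: diff_divide_distrib[symmetric] algebra_simps)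
  finally show ?thesis .
qed

lemma left_piece_bdry:
  assumes cx: "0 < c" "c < x" "x \<le> x0"
  shows "\<bar>(LINT z:{c<..<x}|rho. u z) - (cmom_left x - cmom c)\<bar>
    \<le> (x / (t - B.lo (- c)) - c / (t - B.hi (- x))) * measure rho {c<..<x}"
proof -
  have D: "- c \<in> {..0}" "- x \<in> {..0}" using cx by auto
  define t1 where "t1 = B.lo (- c)"
  define t2 where "t2 = B.hi (- x)"
  have t1: "t1 \<in> B.argmins (- c)" and t2: "t2 \<in> B.argmins (- x)"
    using B.lo_in_argmins[OF D(1)] B.hi_in_argmins[OF D(2)] by (auto simp: t1_def t2_def)
  have t21: "t2 \<le> t1" using B.hi_le_lo[OF D(2,1)] cx by (simp add: t1_def t2_def)
  have t1t: "t1 < t" using B_argmins_less_t[OF cx(1) t1] .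
  have m: "measure rho {c<..<x} = Mb t1 - Mb t2"
    using measure_rho_Ioo[of c x] cx by (simp add: cmass_left_def cmass_def t1_def t2_def)
  have q: "cmom_left x - cmom c = Pb t1 - Pb t2" using cx by (simp add: cmom_left_def cmom_def t1_def t2_def)
  have mo: "c * (Mb t1 - Mb t2) \<le> (t - t2) * (Pb t1 - Pb t2)" "(t - t1) * (Pb t1 - Pb t2) \<le> x * (Mb t1 - Mb t2)"
    using B_momentum_bounds[OF _ _ t1 t2 t21] cx by auto
  have "\<bar>(LINT z:{c<..<x}|rho. u z) - (cmom_left x - cmom c)\<bar>
      \<le> (x / (t - t1) - c / (t - t2)) * measure rho {c<..<x}"
  proof (rule rho.set_integral_sandwich[OF u_integrable])
    fix z assume z: "z \<in> {c<..<x}"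
    then have zD: "- z \<in> {..0}" "0 < z" "z < x0" using cx by auto
    have "t2 \<le> B.lo (- z)" "B.hi (- z) \<le> t1"
      using B.hi_le_lo[OF D(2) zD(1)] B.hi_le_lo[OF zD(1) D(1)] z by (auto simp: t1_def t2_def)
    moreover have "B.lo (- z) \<le> B.hi (- z)" using B.lo_le_hi[OF zD(1)] .
    ultimately have "c / (t - t2) \<le> z / (t - B.lo (- z))" "z / (t - B.hi (- z)) \<le> x / (t - t1)"
      using t1t z cx by (auto intro!: frac_le)
    then show "c / (t - t2) \<le> u z \<and> u z \<le> x / (t - t1)"
      using u_bdry_bounds[OF zD(2)] u_below_x0[OF zD(2,3)] by auto
  next
    show "c / (t - t2) * measure rho {c<..<x} \<le> cmom_left x - cmom c"
      "cmom_left x - cmom c \<le> x / (t - t1) * measure rho {c<..<x}"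
      unfolding m q using mo t1t t21 by (simp_all add: field_simps)
  qed (use cx in auto)
  then show ?thesis by (simp add: t1_def t2_def)
qed

lemma right_piece_bdry:
  assumes xe: "0 < x" "x < e" "e < x0"
  shows "\<bar>(LINT z:{x<..e}|rho. u z) - (cmom e - cmom x)\<bar>
    \<le> (e / (t - B.lo (- x)) - x / (t - B.lo (- e))) * measure rho {x<..e}"
proof -
  have D: "- x \<in> {..0}" "- e \<in> {..0}" using xe by auto
  define t1 where "t1 = B.lo (- x)"
  define t2 where "t2 = B.lo (- e)"
  have t1: "t1 \<in> B.argmins (- x)" and t2: "t2 \<in> B.argmins (- e)"
    using B.lo_in_argmins[OF D(1)] B.lo_in_argmins[OF D(2)] by (auto simp: t1_def t2_def)
  have t21: "t2 \<le> t1" using B.lo_mono[OF D(2,1)] xe by (simp add: t1_def t2_def)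
  have t1t: "t1 < t" using B_argmins_less_t[OF xe(1) t1] .
  have m: "measure rho {x<..e} = Mb t1 - Mb t2"
    using measure_rho_Ioc[of x e] xe by (simp add: cmass_def t1_def t2_def)
  have q: "cmom e - cmom x = Pb t1 - Pb t2" using xe by (simp add: cmom_def t1_def t2_def)
  have mo: "x * (Mb t1 - Mb t2) \<le> (t - t2) * (Pb t1 - Pb t2)" "(t - t1) * (Pb t1 - Pb t2) \<le> e * (Mb t1 - Mb t2)"
    using B_momentum_bounds[OF _ _ t1 t2 t21] xe by auto
  have "\<bar>(LINT z:{x<..e}|rho. u z) - (cmom e - cmom x)\<bar>
      \<le> (e / (t - t1) - x / (t - t2)) * measure rho {x<..e}"
  proof (rule rho.set_integral_sandwich[OF u_integrable])
    fix z assume z: "z \<in> {x<..e}"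
    then have zD: "- z \<in> {..0}" "0 < z" "z < x0" using xe by auto
    have "t2 \<le> B.lo (- z)" "B.hi (- z) \<le> t1"
      using B.lo_mono[OF D(2) zD(1)] B.hi_le_lo[OF zD(1) D(1)] z by (auto simp: t1_def t2_def)
    moreover have "B.lo (- z) \<le> B.hi (- z)" using B.lo_le_hi[OF zD(1)] .
    ultimately have "x / (t - t2) \<le> z / (t - B.lo (- z))" "z / (t - B.hi (- z)) \<le> e / (t - t1)"
      using t1t z xe by (auto intro!: frac_le)
    then show "x / (t - t2) \<le> u z \<and> u z \<le> e / (t - t1)"
      using u_bdry_bounds[OF zD(2)] u_below_x0[OF zD(2,3)] by auto
  next
    show "x / (t - t2) * measure rho {x<..e} \<le> cmom e - cmom x"
      "cmom e - cmom x \<le> e / (t - t1) * measure rho {x<..e}"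
      unfolding m q using mo t1t t21 by (simp_all add: field_simps)
  qed (use xe in auto)
  then show ?thesis by (simp add: t1_def t2_def)
qed

lemma atom_momentum: assumes x: "0 < x" shows "u x * measure rho {x} = cmom x - cmom_left x"
proof -
  have D: "x \<in> {0..}" "- x \<in> {..0}" using x by auto
  consider "x < x0" | "x = x0" | "x0 < x" by linarith
  then show ?thesis
  proof cases
    case 1
    have e: "measure rho {x} = Mb (B.hi (- x)) - Mb (B.lo (- x))"
        "cmom x - cmom_left x = Pb (B.hi (- x)) - Pb (B.lo (- x))"
      using measure_rho_singleton[OF x] 1 by (auto simp: cmass_def cmass_left_def cmom_def cmom_left_def)
    have "B.lo (- x) \<noteq> B.hi (- x) \<Longrightarrow> Mb (B.lo (- x)) < Mb (B.hi (- x))"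
      using Mb_strict_mono[OF B.lo_nonneg[OF D(2)]] B.lo_le_hi[OF D(2)] by simp
    then show ?thesis using e u_below_x0[OF x 1] by (auto simp: u_bdry_def)
  next
    case 2
    have "measure rho {x} = M (I.hi x0) + Mb (B.hi (- x0))"
        "cmom x - cmom_left x = P (I.hi x0) + Pb (B.hi (- x0))"
      using measure_rho_singleton[OF x] 2 by (auto simp: cmass_def cmass_left_def cmom_def cmom_left_def)
    then show ?thesis using u_x0 2 x by simp
  next
    case 3
    have e: "measure rho {x} = M (I.hi x) - M (I.lo x)" "cmom x - cmom_left x = P (I.hi x) - P (I.lo x)"
      using measure_rho_singleton[OF x] 3 by (auto simp: cmass_def cmass_left_def cmom_def cmom_left_def)
    have "I.lo x \<noteq> I.hi x \<Longrightarrow> M (I.lo x) < M (I.hi x)"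
      using M_strict_mono[OF I.lo_nonneg[OF D(1)]] I.lo_le_hi[OF D(1)] by simp
    then show ?thesis using e u_beyond_x0[OF x 3] by (auto simp: u_init_def)
  qed
qed


lemma eventually_piece_bound:
  fixes f q w h :: "real \<Rightarrow> real" and F :: "real filter"
  assumes "(w \<longlongrightarrow> 0) F" "0 < \<epsilon>"
    and "\<forall>\<^sub>F z in F. \<bar>f z - q z\<bar> \<le> w z * h z \<and> 0 \<le> h z"
  shows "\<forall>\<^sub>F z in F. \<bar>f z - q z\<bar> \<le> \<epsilon> * h z"
proof -
  have "\<forall>\<^sub>F z in F. w z < \<epsilon>" using order_tendstoD(2)[OF assms(1,2)] .
  with assms(3) show ?thesis
    by eventually_elim (meson less_imp_le mult_right_mono order.trans)
qed

lemma right_piece_negligible: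
  assumes x: "0 < x" and \<epsilon>: "0 < \<epsilon>"
  shows "\<forall>\<^sub>F e in at_right x. \<bar>(LINT z:{x<..e}|rho. u z) - (cmom e - cmom x)\<bar> \<le> \<epsilon> * measure rho {x<..e}"
proof (cases "x0 \<le> x")
  case True
  have "((\<lambda>e. ((e - x) + (I.hi e - I.hi x)) / t) \<longlongrightarrow> ((x - x) + (I.hi x - I.hi x)) / t) (at_right x)"
    using x t_pos by (intro tendsto_intros I_hi_tendsto_right) auto
  then have lim: "((\<lambda>e. ((e - x) + (I.hi e - I.hi x)) / t) \<longlongrightarrow> 0) (at_right x)" by simp
  have "\<forall>\<^sub>F e in at_right x. x < e" by (rule eventually_at_right_less)
  then have "\<forall>\<^sub>F e in at_right x. \<bar>(LINT z:{x<..e}|rho. u z) - (cmom e - cmom x)\<bar>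
      \<le> ((e - x) + (I.hi e - I.hi x)) / t * measure rho {x<..e} \<and> 0 \<le> measure rho {x<..e}"
    by eventually_elim (use True x right_piece_init in simp)
  then show ?thesis by (rule eventually_piece_bound[OF lim \<epsilon>])
next
  case False
  have "B.lo (- x) < t" using B_argmins_less_t[OF x B.lo_in_argmins] x by simp
  then have "((\<lambda>e. e / (t - B.lo (- x)) - x / (t - B.lo (- e)))
      \<longlongrightarrow> x / (t - B.lo (- x)) - x / (t - B.lo (- x))) (at_right x)"
    using x by (intro tendsto_intros B_lo_tendsto_right) auto
  then have lim: "((\<lambda>e. e / (t - B.lo (- x)) - x / (t - B.lo (- e))) \<longlongrightarrow> 0) (at_right x)" by simp
  have "\<forall>\<^sub>F e in at_right x. x < e \<and> e < x0"
    using False by (auto simp: eventually_at_right_field intro!: exI[of _ x0])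
  then have "\<forall>\<^sub>F e in at_right x. \<bar>(LINT z:{x<..e}|rho. u z) - (cmom e - cmom x)\<bar>
      \<le> (e / (t - B.lo (- x)) - x / (t - B.lo (- e))) * measure rho {x<..e} \<and> 0 \<le> measure rho {x<..e}"
    by eventually_elim (use x right_piece_bdry in simp)
  then show ?thesis by (rule eventually_piece_bound[OF lim \<epsilon>])
qed

lemma left_piece_negligible:
  assumes x: "0 < x" and \<epsilon>: "0 < \<epsilon>"
  shows "\<forall>\<^sub>F c in at_left x. \<bar>(LINT z:{c<..<x}|rho. u z) - (cmom_left x - cmom c)\<bar>
    \<le> \<epsilon> * measure rho {c<..<x}"
proof (cases "x0 < x")
  case True
  have "((\<lambda>c. ((x - c) + (I.lo x - I.hi c)) / t) \<longlongrightarrow> ((x - x) + (I.lo x - I.lo x)) / t) (at_left x)"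
    using x t_pos by (intro tendsto_intros I_hi_tendsto_left) auto
  then have lim: "((\<lambda>c. ((x - c) + (I.lo x - I.hi c)) / t) \<longlongrightarrow> 0) (at_left x)" by simp
  have "\<forall>\<^sub>F c in at_left x. x0 < c \<and> c < x"
    using True by (auto simp: eventually_at_left_field intro!: exI[of _ x0])
  then have "\<forall>\<^sub>F c in at_left x. \<bar>(LINT z:{c<..<x}|rho. u z) - (cmom_left x - cmom c)\<bar>
      \<le> ((x - c) + (I.lo x - I.hi c)) / t * measure rho {c<..<x} \<and> 0 \<le> measure rho {c<..<x}"
    by eventually_elim (use left_piece_init in simp)
  then show ?thesis by (rule eventually_piece_bound[OF lim \<epsilon>])
next
  case False
  have "B.hi (- x) < t" using B_argmins_less_t[OF x B.hi_in_argmins] x by simp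
  then have "((\<lambda>c. x / (t - B.lo (- c)) - c / (t - B.hi (- x)))
      \<longlongrightarrow> x / (t - B.hi (- x)) - x / (t - B.hi (- x))) (at_left x)"
    using x by (intro tendsto_intros B_lo_tendsto_left) auto
  then have lim: "((\<lambda>c. x / (t - B.lo (- c)) - c / (t - B.hi (- x))) \<longlongrightarrow> 0) (at_left x)" by simp
  have "\<forall>\<^sub>F c in at_left x. 0 < c \<and> c < x"
    using x by (auto simp: eventually_at_left_field intro!: exI[of _ 0])
  then have "\<forall>\<^sub>F c in at_left x. \<bar>(LINT z:{c<..<x}|rho. u z) - (cmom_left x - cmom c)\<bar>
      \<le> (x / (t - B.lo (- c)) - c / (t - B.hi (- x))) * measure rho {c<..<x} \<and> 0 \<le> measure rho {c<..<x}"
    by eventually_elim (use False left_piece_bdry in simp)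
  then show ?thesis by (rule eventually_piece_bound[OF lim \<epsilon>])
qed

lemma set_integral_u_Un:
  "A \<inter> B = {} \<Longrightarrow> A \<in> sets borel \<Longrightarrow> B \<in> sets borel \<Longrightarrow> A \<union> B \<subseteq> {0<..}
    \<Longrightarrow> (LINT z:A \<union> B|rho. u z) = (LINT z:A|rho. u z) + (LINT z:B|rho. u z)"
  by (rule set_integral_Un) (auto intro: u_integrable)

lemma momentum_split_at_atom:
  assumes "0 < c" "c < x" "x \<le> e"
  shows "(LINT z:{c<..e}|rho. u z) - (cmom e - cmom c)
      = ((LINT z:{c<..<x}|rho. u z) - (cmom_left x - cmom c)) + ((LINT z:{x<..e}|rho. u z) - (cmom e - cmom x))"
    and "measure rho {c<..<x} + measure rho {x<..e} \<le> cmass e - cmass c"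
proof -
  have U: "{c<..e} = {c<..<x} \<union> ({x} \<union> {x<..e})" using assms by auto
  have i1: "(LINT z:{x} \<union> {x<..e}|rho. u z) = (LINT z:{x}|rho. u z) + (LINT z:{x<..e}|rho. u z)"
    by (rule set_integral_u_Un) (use assms in auto)
  have i2: "(LINT z:{c<..<x} \<union> ({x} \<union> {x<..e})|rho. u z)
      = (LINT z:{c<..<x}|rho. u z) + (LINT z:{x} \<union> {x<..e}|rho. u z)"
    by (rule set_integral_u_Un) (use assms in auto)
  have i3: "(LINT z:{x}|rho. u z) = u x * measure rho {x}"
    by (rule set_integral_at_point) (use assms u_integrable[of "{x}"] in auto)
  have m1: "measure rho ({x} \<union> {x<..e}) = measure rho {x} + measure rho {x<..e}"
    by (rule rho.finite_measure_Union) auto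
  have m2: "measure rho ({c<..<x} \<union> ({x} \<union> {x<..e}))
      = measure rho {c<..<x} + measure rho ({x} \<union> {x<..e})"
    by (rule rho.finite_measure_Union) auto
  show "(LINT z:{c<..e}|rho. u z) - (cmom e - cmom c)
      = ((LINT z:{c<..<x}|rho. u z) - (cmom_left x - cmom c)) + ((LINT z:{x<..e}|rho. u z) - (cmom e - cmom x))"
    unfolding U i2 i1 i3 atom_momentum[OF order.strict_trans[OF assms(1,2)]] by simp
  have "cmass e - cmass c = measure rho {c<..<x} + (measure rho {x} + measure rho {x<..e})"
    using measure_rho_Ioc[of c e] assms unfolding U m2 m1 by simp
  then show "measure rho {c<..<x} + measure rho {x<..e} \<le> cmass e - cmass c"
    using measure_nonneg[of rho "{x}"] by simp
qed

lemma momentum_locally_negligible: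
  assumes x: "0 < x" and \<epsilon>: "0 < \<epsilon>"
  shows "\<exists>d>0. \<forall>c e. 0 < c \<and> c \<le> x \<and> x \<le> e \<and> x - d < c \<and> e < x + d \<longrightarrow>
    \<bar>(LINT z:{c<..e}|rho. u z) - (cmom e - cmom c)\<bar> \<le> \<epsilon> * (cmass e - cmass c)"
proof -
  obtain b1 where "x < b1" and right: "\<And>e. x < e \<Longrightarrow> e < b1 \<Longrightarrow>
      \<bar>(LINT z:{x<..e}|rho. u z) - (cmom e - cmom x)\<bar> \<le> \<epsilon> * measure rho {x<..e}"
    using right_piece_negligible[OF x \<epsilon>] unfolding eventually_at_right_field by blast
  obtain b2 where "b2 < x" and left: "\<And>c. b2 < c \<Longrightarrow> c < x \<Longrightarrow>
      \<bar>(LINT z:{c<..<x}|rho. u z) - (cmom_left x - cmom c)\<bar> \<le> \<epsilon> * measure rho {c<..<x}"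
    using left_piece_negligible[OF x \<epsilon>] unfolding eventually_at_left_field by blast
  have right': "\<bar>(LINT z:{x<..e}|rho. u z) - (cmom e - cmom x)\<bar> \<le> \<epsilon> * measure rho {x<..e}"
    if "x \<le> e" "e < b1" for e
    using right[of e] that by (cases "x = e") (auto simp: set_lebesgue_integral_def)
  show ?thesis
  proof (intro exI[of _ "min (b1 - x) (x - b2)"] conjI allI impI)
    show "0 < min (b1 - x) (x - b2)" using \<open>x < b1\<close> \<open>b2 < x\<close> by simp
    fix c e assume ce: "0 < c \<and> c \<le> x \<and> x \<le> e \<and> x - min (b1 - x) (x - b2) < c \<and> e < x + min (b1 - x) (x - b2)"
    then have "b2 < c" "e < b1" by linarith+
    show "\<bar>(LINT z:{c<..e}|rho. u z) - (cmom e - cmom c)\<bar> \<le> \<epsilon> * (cmass e - cmass c)"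
    proof (cases "c = x")
      case True
      then show ?thesis using right'[OF _ \<open>e < b1\<close>] ce measure_rho_Ioc[of x e] by simp
    next
      case False
      then have "c < x" using ce by simp
      note split = momentum_split_at_atom[of c x e]
      have "\<bar>(LINT z:{c<..e}|rho. u z) - (cmom e - cmom c)\<bar>
          \<le> \<bar>(LINT z:{c<..<x}|rho. u z) - (cmom_left x - cmom c)\<bar>
            + \<bar>(LINT z:{x<..e}|rho. u z) - (cmom e - cmom x)\<bar>"
        using split(1) \<open>c < x\<close> ce by simp
      also have "\<dots> \<le> \<epsilon> * (measure rho {c<..<x} + measure rho {x<..e})"
        using left[OF \<open>b2 < c\<close> \<open>c < x\<close>] right'[OF _ \<open>e < b1\<close>] ce by (simp add: distrib_left)
      also have "\<dots> \<le> \<epsilon> * (cmass e - cmass c)"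
        using split(2) \<open>c < x\<close> ce \<epsilon> by (intro mult_left_mono) auto
      finally show ?thesis .
    qed
  qed
qed

lemma momentum_Ioc:
  assumes "0 < a" "a \<le> b" shows "(LINT z:{a<..b}|rho. u z) = cmom b - cmom a"
proof -
  have "(LINT z:{a<..b}|rho. u z) - cmom b = (LINT z:{a<..a}|rho. u z) - cmom a"
  proof (rule eq_if_locally_negligible[OF assms(2)])
    fix \<epsilon> x :: real assume "0 < \<epsilon>" "x \<in> {a..b}"
    then obtain d where "0 < d" and d: "\<forall>c e. 0 < c \<and> c \<le> x \<and> x \<le> e \<and> x - d < c \<and> e < x + d \<longrightarrow>
        \<bar>(LINT z:{c<..e}|rho. u z) - (cmom e - cmom c)\<bar> \<le> \<epsilon> * (cmass e - cmass c)"
      using momentum_locally_negligible[of x \<epsilon>] assms by auto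
    show "\<exists>d>0. \<forall>c e. a \<le> c \<and> c \<le> x \<and> x \<le> e \<and> e \<le> b \<and> x - d < c \<and> e < x + d \<longrightarrow>
        \<bar>((LINT z:{a<..e}|rho. u z) - cmom e) - ((LINT z:{a<..c}|rho. u z) - cmom c)\<bar> \<le> \<epsilon> * (cmass e - cmass c)"
    proof (intro exI[of _ d] conjI allI impI)
      fix c e assume ce: "a \<le> c \<and> c \<le> x \<and> x \<le> e \<and> e \<le> b \<and> x - d < c \<and> e < x + d"
      have "{a<..e} = {a<..c} \<union> {c<..e}" "{a<..c} \<union> {c<..e} \<subseteq> {0<..}" using ce assms(1) by auto
      then have "(LINT z:{a<..e}|rho. u z) = (LINT z:{a<..c}|rho. u z) + (LINT z:{c<..e}|rho. u z)"
        using set_integral_u_Un[of "{a<..c}" "{c<..e}"] by auto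
      then show "\<bar>((LINT z:{a<..e}|rho. u z) - cmom e) - ((LINT z:{a<..c}|rho. u z) - cmom c)\<bar>
          \<le> \<epsilon> * (cmass e - cmass c)"
        using d[rule_format, of c e] ce assms(1) by simp
    qed (rule \<open>0 < d\<close>)
  qed
  then show ?thesis by (simp add: set_lebesgue_integral_def)
qed


section \<open>Total mass and momentum\<close>

lemma set_integral_u_bound:
  assumes "A \<in> sets borel" "A \<subseteq> {0<..}"
  shows "\<bar>LINT z:A|rho. u z\<bar> \<le> 2 * u_bound * measure rho A"
proof -
  have "\<bar>(LINT z:A|rho. u z) - 0\<bar> \<le> (u_bound - - u_bound) * measure rho A"
  proof (rule rho.set_integral_sandwich[OF u_integrable[OF assms]])
    show "- u_bound \<le> u z \<and> u z \<le> u_bound" if "z \<in> A" for z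
      using u_bounded[of z] that assms(2) by auto
    have "0 \<le> u_bound" using B0_nonneg Bb_pos by (simp add: u_bound_def)
    then show "- u_bound * measure rho A \<le> 0" "0 \<le> u_bound * measure rho A" by auto
  qed (use assms in auto)
  then show ?thesis by simp
qed

lemma momentum_Ioc_0: assumes "0 < b" shows "(LINT z:{0<..b}|rho. u z) = cmom b - cmom 0"
proof -
  have small: "((\<lambda>a. LINT z:{0<..a}|rho. u z) \<longlongrightarrow> 0) (at_right 0)"
  proof (rule Lim_null_comparison)
    have bound: "norm (LINT z:{0<..a}|rho. u z) \<le> 2 * u_bound * (cmass a - cmass 0)" if "0 < a" for a
    proof -
      have "{0<..a} \<subseteq> {0<..}" by auto
      then show ?thesis using set_integral_u_bound[of "{0<..a}"] measure_rho_Ioc[of 0 a] that by simp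
    qed
    then show "\<forall>\<^sub>F a in at_right 0. norm (LINT z:{0<..a}|rho. u z) \<le> 2 * u_bound * (cmass a - cmass 0)"
      by (rule eventually_mono[OF eventually_at_right_less[of "0::real"]]) (simp add: bound)
    have "((\<lambda>a. 2 * u_bound * (cmass a - cmass 0)) \<longlongrightarrow> 2 * u_bound * (cmass 0 - cmass 0)) (at_right 0)"
      by (intro tendsto_intros cumulative_tendsto_right) simp
    then show "((\<lambda>a. 2 * u_bound * (cmass a - cmass 0)) \<longlongrightarrow> 0) (at_right 0)" by simp
  qed
  have ev: "\<forall>\<^sub>F a in at_right 0. (LINT z:{0<..a}|rho. u z) + (cmom b - cmom a) = (LINT z:{0<..b}|rho. u z)"
  proof (rule eventually_at_right_field[THEN iffD2], intro exI[of _ b] conjI allI impI)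
    fix a assume "0 < a" "a < b"
    then have "{0<..b} = {0<..a} \<union> {a<..b}" by auto
    moreover have "(LINT z:{0<..a} \<union> {a<..b}|rho. u z) = (LINT z:{0<..a}|rho. u z) + (LINT z:{a<..b}|rho. u z)"
      by (rule set_integral_u_Un) (use \<open>0 < a\<close> in auto)
    ultimately show "(LINT z:{0<..a}|rho. u z) + (cmom b - cmom a) = (LINT z:{0<..b}|rho. u z)"
      using momentum_Ioc[of a b] \<open>0 < a\<close> \<open>a < b\<close> by simp
  qed (rule assms)
  have "((\<lambda>a. (LINT z:{0<..a}|rho. u z) + (cmom b - cmom a)) \<longlongrightarrow> 0 + (cmom b - cmom 0)) (at_right 0)"
    by (intro tendsto_add tendsto_diff small tendsto_const cumulative_tendsto_right) simp
  from Lim_transform_eventually[OF this ev]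
  have "((\<lambda>a::real. LINT z:{0<..b}|rho. u z) \<longlongrightarrow> 0 + (cmom b - cmom 0)) (at_right 0)" .
  then show ?thesis by (simp add: tendsto_const_iff)
qed

lemma momentum_Ioi_0: "(LINT z:{0<..}|rho. u z) = Pt - cmom 0"
proof -
  have small: "((\<lambda>b. LINT z:{b<..}|rho. u z) \<longlongrightarrow> 0) at_top"
  proof (rule Lim_null_comparison)
    have "norm (LINT z:{b<..}|rho. u z) \<le> 2 * u_bound * (Mt - cmass b)" if "0 \<le> b" for b
    proof -
      have "{b<..} \<subseteq> {0<..}" using that by auto
      then show ?thesis using set_integral_u_bound[of "{b<..}"] measure_rho_Ioi[of b] that by simp
    qed
    then show "\<forall>\<^sub>F b in at_top. norm (LINT z:{b<..}|rho. u z) \<le> 2 * u_bound * (Mt - cmass b)"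
      by (auto simp: eventually_at_top_linorder intro!: exI[of _ 0])
    have "((\<lambda>b. 2 * u_bound * (Mt - cmass b)) \<longlongrightarrow> 2 * u_bound * (Mt - Mt)) at_top"
      by (intro tendsto_intros cmass_at_top)
    then show "((\<lambda>b. 2 * u_bound * (Mt - cmass b)) \<longlongrightarrow> 0) at_top" by simp
  qed
  have ev: "\<forall>\<^sub>F b in at_top. (cmom b - cmom 0) + (LINT z:{b<..}|rho. u z) = (LINT z:{0<..}|rho. u z)"
  proof (rule eventually_at_top_linorder[THEN iffD2], intro exI[of _ 1] allI impI)
    fix b :: real assume "1 \<le> b"
    then have "{0<..} = {0<..b} \<union> {b<..}" by auto
    moreover have "(LINT z:{0<..b} \<union> {b<..}|rho. u z) = (LINT z:{0<..b}|rho. u z) + (LINT z:{b<..}|rho. u z)"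
      by (rule set_integral_u_Un) (use \<open>1 \<le> b\<close> in auto)
    ultimately show "(cmom b - cmom 0) + (LINT z:{b<..}|rho. u z) = (LINT z:{0<..}|rho. u z)"
      using momentum_Ioc_0[of b] \<open>1 \<le> b\<close> by simp
  qed
  have "((\<lambda>b. (cmom b - cmom 0) + (LINT z:{b<..}|rho. u z)) \<longlongrightarrow> (Pt - cmom 0) + 0) at_top"
    by (intro tendsto_add tendsto_diff cmom_at_top tendsto_const small)
  from Lim_transform_eventually[OF this ev]
  have "((\<lambda>b::real. LINT z:{0<..}|rho. u z) \<longlongrightarrow> (Pt - cmom 0) + 0) at_top" .
  then show ?thesis by (simp add: tendsto_const_iff)
qed

lemma cmass_0: "cmass 0 = (if 0 < gap 0 then - Mb t else M (I.hi 0))"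
  and cmom_0: "cmom 0 = (if 0 < gap 0 then - Pb t else P (I.hi 0))"
  using x0_pos_iff by (simp_all add: cmass_def cmom_def B_lo_0)

lemma atom0_eq: "atom0 u0 ub r0 rb t = (if gap 0 \<le> 0 then cmass 0 + Mb t else 0)"
  unfolding atom0_def using Fm_minus_Gm[of 0] massR_eq[of 0] m_0 by auto

lemma LINT_boundary: "(LINT \<eta>:{0..t}|lborel. rb \<eta> * ub \<eta>) = Mb t"
  "(LINT \<eta>:{0..t}|lborel. rb \<eta> * (ub \<eta>)\<^sup>2) = Pb t"
  using LINT_cumulative[of 0 t] t_pos by (simp_all add: cumulative_0)

lemma finite_rho_Ioi: "emeasure rho {0<..} < \<infinity>"
  using rho.emeasure_finite[of "{0<..}"] by (simp add: less_top[symmetric])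

lemma total_mass:
  "measure rho {0<..} + atom0 u0 ub r0 rb t
    = (LINT x:{0..}|lborel. r0 x) + (LINT \<eta>:{0..t}|lborel. rb \<eta> * ub \<eta>)"
proof -
  have "measure rho {0<..} + atom0 u0 ub r0 rb t = Mt + Mb t"
    using measure_rho_Ioi[of 0] unfolding atom0_eq cmass_0 by (cases "0 < gap 0") simp_all
  then show ?thesis by (simp only: LINT_boundary Mt_def)
qed

lemma total_momentum_boundary_dominated:
  assumes "Gm ub rb 0 t \<le> Fm u0 r0 0 t"
  shows "(LINT x:{0<..}|rho. u x) + u 0 * atom0 u0 ub r0 rb t
    = (LINT x:{0..}|lborel. r0 x * u0 x) + (LINT \<eta>:{0..t}|lborel. rb \<eta> * (ub \<eta>)\<^sup>2)"
proof -
  have "0 \<le> gap 0" using assms Fm_minus_Gm[of 0] by simp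
  then consider "0 < gap 0" | "gap 0 = 0" by linarith
  then have "(LINT x:{0<..}|rho. u x) + u 0 * atom0 u0 ub r0 rb t = Pt + Pb t"
  proof cases
    case 1
    then show ?thesis unfolding momentum_Ioi_0 cmom_0 atom0_eq by simp
  next
    case 2
    then have "u 0 * atom0 u0 ub r0 rb t = P (I.hi 0) + Pb t"
      using u_0_zero_gap unfolding atom0_eq cmass_0 by simp
    then show ?thesis using 2 unfolding momentum_Ioi_0 cmom_0 by simp
  qed
  then show ?thesis by (simp only: LINT_boundary Pt_def)
qed

lemma N_nonneg: "0 \<le> y \<Longrightarrow> 0 \<le> N y"
  using N_increment_bounds[of 0 y] by (simp add: cumulative_0)

lemma Pb_nonneg: "0 \<le> Pb y"
  unfolding Pb_def
proof (rule integral_nonneg[OF loc_bdd_borel_integrable_on[OF loc_bdd_borel_integrands(4) order.refl]])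
  show "0 \<le> rb e * (ub e)\<^sup>2" if "e \<in> {0..y}" for e using rb_pos[of e] that by simp
qed

lemma total_momentum_initial_dominated:
  assumes "Fm u0 r0 0 t < Gm ub rb 0 t"
  shows "(LINT x:{0<..}|rho. u x) + u 0 * atom0 u0 ub r0 rb t
    \<ge> (LINT x:{0..}|lborel. r0 x * u0 x) - (LINT \<eta>:{0..t}|lborel. rb \<eta> * (ub \<eta>)\<^sup>2)"
proof -
  have neg: "gap 0 < 0" using assms Fm_minus_Gm[of 0] by simp
  have hi: "I.hi 0 \<in> I.argmins 0" "0 \<le> I.hi 0" using I.hi_in_argmins[of 0] I.hi_nonneg[of 0] by auto
  have "I.Phi_min 0 = t * P (I.hi 0) + N (I.hi 0)" using I.Phi_min_argmin[OF hi(1)] by (simp add: I_Phi)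
  moreover have "B.Phi_min 0 \<le> 0" using B.Phi_min_le[of 0 0] by (simp add: B.Phi_def cumulative_0)
  ultimately have "t * P (I.hi 0) < 0" using neg N_nonneg[OF hi(2)] by (simp add: gap_def)
  then have "P (I.hi 0) < 0" using t_pos by (simp add: mult_less_0_iff)
  then have "P (I.hi 0) \<le> Pb t" using Pb_nonneg[of t] by linarith
  then have "Pt - Pb t \<le> (LINT x:{0<..}|rho. u x) + u 0 * atom0 u0 ub r0 rb t"
    using neg u_0_neg_gap unfolding momentum_Ioi_0 cmom_0 by simp
  then show ?thesis by (simp only: LINT_boundary Pt_def)
qed

end

theorem theorem4p4:
  fixes u0 ub r0 rb :: "real \<Rightarrow> real" and t :: real
  assumes u0_meas: "set_borel_measurable borel {0..} u0"
    and u0_bdd: "\<exists>B. \<forall>x\<ge>0. \<bar>u0 x\<bar> \<le> B"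
    and ub_meas: "set_borel_measurable borel {0..} ub"
    and ub_bdd: "\<exists>B. \<forall>x\<ge>0. \<bar>ub x\<bar> \<le> B"
    and ub_pos: "\<forall>x\<ge>0. ub x > 0"
    and r0_meas: "set_borel_measurable borel {0..} r0"
    and r0_pos: "\<forall>x\<ge>0. r0 x > 0"
    and r0_locbdd: "\<forall>b. \<exists>B. \<forall>x\<in>{0..b}. \<bar>r0 x\<bar> \<le> B"
    and rb_meas: "set_borel_measurable borel {0..} rb"
    and rb_pos: "\<forall>x\<ge>0. rb x > 0"
    and rb_locbdd: "\<forall>b. \<exists>B. \<forall>x\<in>{0..b}. \<bar>rb x\<bar> \<le> B"
    and r0_L1: "set_integrable lborel {0..} r0"
    and t_pos: "t > 0"
  shows "emeasure (rhoLS u0 ub r0 rb t) {0<..} < \<infinity> \<and>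
         (measure (rhoLS u0 ub r0 rb t) {0<..} + atom0 u0 ub r0 rb t
           = (LINT x:{0..}|lborel. r0 x) + (LINT \<eta>:{0..t}|lborel. rb \<eta> * ub \<eta>))
       \<and> set_integrable (rhoLS u0 ub r0 rb t) {0<..} (\<lambda>x. vel u0 ub r0 rb x t)
       \<and> (Fm u0 r0 0 t \<ge> Gm ub rb 0 t \<longrightarrow>
         (LINT x:{0<..}|rhoLS u0 ub r0 rb t. vel u0 ub r0 rb x t)
           + vel u0 ub r0 rb 0 t * atom0 u0 ub r0 rb t
         = (LINT x:{0..}|lborel. r0 x * u0 x) + (LINT \<eta>:{0..t}|lborel. rb \<eta> * (ub \<eta>)\<^sup>2))
       \<and> (Fm u0 r0 0 t < Gm ub rb 0 t \<longrightarrow>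
         (LINT x:{0<..}|rhoLS u0 ub r0 rb t. vel u0 ub r0 rb x t)
           + vel u0 ub r0 rb 0 t * atom0 u0 ub r0 rb t
         \<ge> (LINT x:{0..}|lborel. r0 x * u0 x) - (LINT \<eta>:{0..t}|lborel. rb \<eta> * (ub \<eta>)\<^sup>2))"
proof -
  obtain B1 B2 where B1: "\<forall>x\<ge>0. \<bar>u0 x\<bar> \<le> B1" and B2: "\<forall>x\<ge>0. \<bar>ub x\<bar> \<le> B2"
    using u0_bdd ub_bdd by blast
  interpret ibvp u0 ub r0 rb t "max B1 0" "max B2 1"
    using assms B1 B2 by unfold_locales force+
  show ?thesis
    using finite_rho_Ioi total_mass u_integrable[of "{0<..}"] total_momentum_boundary_dominated
      total_momentum_initial_dominated by simp
qed

end
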